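(* Let $p$ be an odd prime, $\omega=e^{2\pi i/p}$, $A\in M_{r\times s}(\mathbb{Z}_p)$, $c\in\mathbb{Z}_p^r$, and let $\Gamma=\Gamma(A,c)$ be the solution group of the linear constraint system $Ax=c\bmod p$. Let $m\ge1$ and let $Q$ be a subgroup with $T_{(p)}\subset Q\subset T_{(p^m)}$ that is invariant under conjugation by $X$, and $N\ge1$. Then the linear constraint system admits a quantum solution $\eta:\Gamma\to K^{\otimes N}_Q(p)$ if and only if it admits a classical solution, i.e. a vector $x\in\mathbb{Z}_p^s$ with $Ax\equiv c\bmod p$ (equivalently, a homomorphism $\Gamma\to\mathbb{Z}_p$ sending $J$ to $1$).
   Context: The solution group $\Gamma(A,c)$ is the finitely presented group with generators $J,g_1,\dots,g_s$ and relations: $g_k^p=e$ for all $k$ and $J^p=e$; $Jg_kJ^{-1}g_k^{-1}=e$ for all $k$, and $g_jg_kg_j^{-1}g_k^{-1}=e$ whenever there is a row $i$ with $A_{ij}\neq0$ and $A_{ik}\neq0$; and $\prod_{j=1}^s g_j^{A_{ij}}=J^{c_i}$ for all $i\in\{1,\dots,r\}$. A quantum solution in a group $G$ of unitaries is a group homomorphism $\eta:\Gamma\to G$ with $\eta(J)=\omega\mathbbm{1}$. Let $\{|q\rangle:q\in\mathbb{Z}_p\}$ be the computational basis of $\mathbb{C}^p$, $X|q\rangle=|q+1\rangle$; for $\xi:\mathbb{Z}_p\to U(1)$, $S_\xi=\mathrm{diag}(\xi(0),\dots,\xi(p-1))$; $T=\{S_\xi:\prod_q\xi(q)=1\}$,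 $T_{(p^k)}=\{S\in T:S^{p^k}=\mathbbm{1}\}$. $K_Q(p)$ is the subgroup of $SU(p)$ generated by all $S_\xi X^b$ with $S_\xi\in Q$, $b\in\mathbb{Z}_p$, and $K_Q^{\otimes N}(p)$ is the group of $N$-fold Kronecker products $M_1\otimes\cdots\otimes M_N$ with $M_i\in K_Q(p)$. *)

theory Defs
  imports Complex_Main "Jordan_Normal_Form.Matrix"
begin

definition omega :: "nat \<Rightarrow> complex" where
  "omega p = cis (2 * pi / real p)"

definition Xmat :: "nat \<Rightarrow> complex mat" where
  "Xmat p = mat p p (\<lambda>(i, j). if i = (j + 1) mod p then 1 else 0)"

definition Smat :: "nat \<Rightarrow> (nat \<Rightarrow> complex) \<Rightarrow> complex mat" where
  "Smat p \<xi> = mat p p (\<lambda>(i, j). if i = j then \<xi> i else 0)"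

definition Tgrp :: "nat \<Rightarrow> complex mat set" where
  "Tgrp p = {Smat p \<xi> | \<xi>. (\<forall>q<p. norm (\<xi> q) = 1) \<and> (\<Prod>q<p. \<xi> q) = 1}"

definition Tpow :: "nat \<Rightarrow> nat \<Rightarrow> complex mat set" where
  "Tpow p n = {S \<in> Tgrp p. S ^\<^sub>m n = 1\<^sub>m p}"

definition is_subgroup_mat :: "nat \<Rightarrow> complex mat set \<Rightarrow> bool" where
  "is_subgroup_mat p Q \<longleftrightarrow> Q \<subseteq> carrier_mat p p \<and> 1\<^sub>m p \<in> Q \<and>
     (\<forall>A\<in>Q. \<forall>B\<in>Q. A * B \<in> Q) \<and> (\<forall>A\<in>Q. \<exists>B\<in>Q. A * B = 1\<^sub>m p)"

inductive_set KQ :: "nat \<Rightarrow> complex mat set \<Rightarrow> complex mat set" for p Q where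
  one: "1\<^sub>m p \<in> KQ p Q"
| gen: "S \<in> Q \<Longrightarrow> b < p \<Longrightarrow> S * (Xmat p ^\<^sub>m b) \<in> KQ p Q"
| mult: "A \<in> KQ p Q \<Longrightarrow> B \<in> KQ p Q \<Longrightarrow> A * B \<in> KQ p Q"
| inv: "A \<in> KQ p Q \<Longrightarrow> B \<in> carrier_mat p p \<Longrightarrow> A * B = 1\<^sub>m p \<Longrightarrow> B \<in> KQ p Q"

text \<open>Kronecker product (row index of A (x) B is i = i1 * dim_row B + i2).\<close>
definition kron :: "complex mat \<Rightarrow> complex mat \<Rightarrow> complex mat" where
  "kron A B = mat (dim_row A * dim_row B) (dim_col A * dim_col B)
     (\<lambda>(i, j). A $$ (i div dim_row B, j div dim_col B) * B $$ (i mod dim_row B, j mod dim_col B))"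

fun kron_list :: "complex mat list \<Rightarrow> complex mat" where
  "kron_list [] = 1\<^sub>m 1"
| "kron_list (M # Ms) = kron M (kron_list Ms)"

definition KQN :: "nat \<Rightarrow> complex mat set \<Rightarrow> nat \<Rightarrow> complex mat set" where
  "KQN p Q N = {kron_list Ms | Ms. length Ms = N \<and> set Ms \<subseteq> KQ p Q}"

definition ord_prod :: "nat \<Rightarrow> nat \<Rightarrow> (nat \<Rightarrow> complex mat) \<Rightarrow> complex mat" where
  "ord_prod n s f = foldr (\<lambda>M acc. M * acc) (map f [0..<s]) (1\<^sub>m n)"

text \<open>A quantum solution of Ax = c mod p (A an r x s matrix over Z_p, entries represented
  by integers taken mod p) in the group G of n x n unitaries: a homomorphism eta from the
  solution group Gamma(A,c) into G with eta(J) = omega * 1.  By the universal property of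
  the presentation, such a homomorphism is exactly an assignment g_j = eta(g_j) in G of the
  generators satisfying the defining relations (with J mapped to omega * 1, which must lie in G).\<close>
definition quantum_solution ::
  "nat \<Rightarrow> nat \<Rightarrow> nat \<Rightarrow> (nat \<Rightarrow> nat \<Rightarrow> int) \<Rightarrow> (nat \<Rightarrow> int) \<Rightarrow> nat \<Rightarrow> complex mat set
     \<Rightarrow> (nat \<Rightarrow> complex mat) \<Rightarrow> bool" where
  "quantum_solution p r s A c n G g \<longleftrightarrow>
     omega p \<cdot>\<^sub>m 1\<^sub>m n \<in> G \<and>
     (\<forall>j<s. g j \<in> G) \<and>
     (\<forall>j<s. g j ^\<^sub>m p = 1\<^sub>m n) \<and>
     (\<forall>j<s. \<forall>k<s. (\<exists>i<r. A i j mod int p \<noteq> 0 \<and> A i k mod int p \<noteq> 0)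
         \<longrightarrow> g j * g k = g k * g j) \<and>
     (\<forall>i<r. ord_prod n s (\<lambda>j. g j ^\<^sub>m nat (A i j mod int p))
            = (omega p ^ nat (c i mod int p)) \<cdot>\<^sub>m 1\<^sub>m n)"

definition classical_solution ::
  "nat \<Rightarrow> nat \<Rightarrow> nat \<Rightarrow> (nat \<Rightarrow> nat \<Rightarrow> int) \<Rightarrow> (nat \<Rightarrow> int) \<Rightarrow> (nat \<Rightarrow> int) \<Rightarrow> bool" where
  "classical_solution p r s A c x \<longleftrightarrow>
     (\<forall>i<r. (\<Sum>j<s. A i j * x j) mod int p = c i mod int p)"

end

theory Submission
  imports Defs "HOL-Number_Theory.Cong"
begin

text \<open>
  Since \<open>Q \<subseteq> T\<close>, every element of \<open>K\<^sub>Q(p)\<close> is a monomial matrix \<open>S\<^sub>f X^b\<close> with \<open>\<Prod> f = 1\<close>.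
  For an odd prime \<open>p\<close> each such matrix \<open>M\<close> gets a phase \<open>\<phi>(M)\<close> with
  \<open>\<phi>(G H) = \<mu>^((p+1)/2) \<phi>(G) \<phi>(H)\<close> whenever \<open>G H = \<mu> H G\<close>: if \<open>G\<close> is not diagonal, a
  diagonal change of frame turns the quasi-centralizer of \<open>G\<close> into scalar multiples of Weyl
  operators, and \<open>\<phi>(M)\<close> is computed from the scalar \<open>\<lambda>\<close> in \<open>M R M = \<lambda> R\<close>, \<open>R\<close> the parity
  operator of that frame. Multiplying \<open>\<phi>\<close> over the tensor factors, the commutation scalars of the
  factors cancel; so for a quantum solution \<open>g\<^sub>j\<close> the phases are \<open>p\<close>-th roots of unity
  \<open>\<omega>^x\<^sub>j\<close> with \<open>\<Prod>\<^sub>j \<omega>^(A\<^sub>i\<^sub>j x\<^sub>j) = \<phi>(\<omega>^c\<^sub>i 1) = \<omega>^c\<^sub>i\<close>, i.e. \<open>A x = c\<close>. Conversely a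
  classical solution \<open>x\<close> gives the scalar quantum solution \<open>g\<^sub>j = \<omega>^x\<^sub>j 1\<close>.
\<close>

lemma smult_smult_mat: "a \<cdot>\<^sub>m (b \<cdot>\<^sub>m A) = (a * b) \<cdot>\<^sub>m (A :: 'a :: semigroup_mult mat)"
  by (rule eq_matI) (auto simp: mult.assoc)

lemma one_smult_mat [simp]: "1 \<cdot>\<^sub>m A = (A :: 'a :: monoid_mult mat)"
  by (rule eq_matI) auto

lemma smult_mat_cancel:
  assumes "M $$ (i, j) \<noteq> 0" "i < dim_row M" "j < dim_col M" "a \<cdot>\<^sub>m M = b \<cdot>\<^sub>m (M :: 'a :: idom mat)"
  shows "a = b"
proof -
  have "(a \<cdot>\<^sub>m M) $$ (i, j) = (b \<cdot>\<^sub>m M) $$ (i, j)" using assms(4) by simp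
  then show ?thesis using assms(1-3) by simp
qed

lemma smult_one_mat_mult: "(a \<cdot>\<^sub>m 1\<^sub>m n) * (b \<cdot>\<^sub>m 1\<^sub>m n) = (a * b) \<cdot>\<^sub>m (1\<^sub>m n :: 'a :: comm_ring_1 mat)"
proof -
  have "(a \<cdot>\<^sub>m 1\<^sub>m n) * (b \<cdot>\<^sub>m 1\<^sub>m n) = a \<cdot>\<^sub>m (1\<^sub>m n * (b \<cdot>\<^sub>m (1\<^sub>m n :: 'a mat)))"
    by (rule mult_smult_assoc_mat) auto
  then show ?thesis by (simp add: smult_smult_mat)
qed

lemma smult_one_mat_pow: "(a \<cdot>\<^sub>m 1\<^sub>m n) ^\<^sub>m k = (a ^ k) \<cdot>\<^sub>m (1\<^sub>m n :: 'a :: comm_ring_1 mat)"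
  by (induction k) (simp_all add: smult_one_mat_mult mult.commute)

lemma commute_pow_mat:
  assumes A: "A \<in> carrier_mat n n" and B: "B \<in> carrier_mat n n" and comm: "A * B = B * A"
  shows "A ^\<^sub>m k * B = B * A ^\<^sub>m k"
proof (induction k)
  case 0
  then show ?case using A B by simp
next
  case (Suc k)
  have Ak: "A ^\<^sub>m k \<in> carrier_mat n n" using A by simp
  have "A ^\<^sub>m Suc k * B = A ^\<^sub>m k * (A * B)" using assoc_mult_mat[OF Ak A B] by simp
  also have "\<dots> = (A ^\<^sub>m k * B) * A" using comm assoc_mult_mat[OF Ak B A] by simp
  also have "\<dots> = B * A ^\<^sub>m Suc k" using Suc assoc_mult_mat[OF B Ak A] by simp
  finally show ?case .
qed

lemma commute_pow_pow_mat:
  assumes A: "A \<in> carrier_mat n n" and B: "B \<in> carrier_mat n n" and comm: "A * B = B * A"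
  shows "A ^\<^sub>m a * B ^\<^sub>m b = B ^\<^sub>m b * A ^\<^sub>m a"
  using commute_pow_mat[OF B pow_carrier_mat[OF A] commute_pow_mat[OF A B comm, symmetric]]
  by simp

lemma foldr_mult_carrier_mat:
  "\<forall>A\<in>set As. A \<in> carrier_mat n n \<Longrightarrow> foldr (\<lambda>A acc. A * acc) As (1\<^sub>m n) \<in> carrier_mat n n"
  by (induction As) auto

lemma commute_foldr_mult_mat:
  fixes M :: "'a :: semiring_1 mat"
  assumes M: "M \<in> carrier_mat n n" and As: "\<forall>A\<in>set As. A \<in> carrier_mat n n \<and> M * A = A * M"
  shows "M * foldr (\<lambda>A acc. A * acc) As (1\<^sub>m n) = foldr (\<lambda>A acc. A * acc) As (1\<^sub>m n) * M"
  using As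
proof (induction As)
  case Nil
  then show ?case using M by (simp add: left_mult_one_mat[OF M] right_mult_one_mat[OF M])
next
  case (Cons A As)
  define F where "F = foldr (\<lambda>A acc. A * acc) As (1\<^sub>m n)"
  have As: "\<forall>A\<in>set As. A \<in> carrier_mat n n \<and> M * A = A * M" using Cons.prems by simp
  have F: "F \<in> carrier_mat n n" unfolding F_def using As by (intro foldr_mult_carrier_mat) simp
  have A: "A \<in> carrier_mat n n" "M * A = A * M" using Cons.prems by auto
  have "M * (A * F) = (A * M) * F" using assoc_mult_mat[OF M A(1) F] A(2) by simp
  also have "\<dots> = A * (M * F)" by (rule assoc_mult_mat[OF A(1) M F])
  also have "M * F = F * M" using Cons.IH[OF As] by (simp add: F_def)
  also have "A * (F * M) = (A * F) * M" by (rule assoc_mult_mat[OF A(1) F M, symmetric])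
  finally show ?case by (simp add: F_def)
qed

lemma ord_prod_smult_one: "ord_prod n s (\<lambda>j. e j \<cdot>\<^sub>m 1\<^sub>m n) = (\<Prod>j<s. e j) \<cdot>\<^sub>m 1\<^sub>m n"
proof -
  have "foldr (\<lambda>M acc. M * acc) (map (\<lambda>j. e j \<cdot>\<^sub>m 1\<^sub>m n) js) (1\<^sub>m n) = (\<Prod>j\<leftarrow>js. e j) \<cdot>\<^sub>m 1\<^sub>m n"
    for js by (induction js) (simp_all add: smult_one_mat_mult)
  moreover have "(\<Prod>j\<leftarrow>[0..<s]. e j) = (\<Prod>j<s. e j)"
    by (subst prod.distinct_set_conv_list[symmetric]) (simp_all add: lessThan_atLeast0)
  ultimately show ?thesis by (simp add: ord_prod_def)
qed

lemma one_mat_nonzero_entry: "p > 0 \<Longrightarrow> \<exists>i j. i < p \<and> j < p \<and> (1\<^sub>m p :: complex mat) $$ (i, j) \<noteq> 0"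
  by (intro exI[of _ 0]) simp

text \<open>Functions on \<open>\<int>\<^sub>p\<close> are modelled as \<open>p\<close>-periodic functions on \<open>\<int>\<close>.\<close>

definition periodic_mod :: "nat \<Rightarrow> (int \<Rightarrow> 'a) \<Rightarrow> bool" where
  "periodic_mod p f \<longleftrightarrow> (\<forall>t t'. int p dvd (t - t') \<longrightarrow> f t = f t')"

lemma periodic_modD: "periodic_mod p f \<Longrightarrow> int p dvd (t - t') \<Longrightarrow> f t = f t'"
  unfolding periodic_mod_def by blast

lemma periodic_mod_mod: "periodic_mod p f \<Longrightarrow> f (t mod int p) = f t"
  unfolding periodic_mod_def by (metis mod_mod_trivial mod_eq_dvd_iff)

lemma periodic_mod_const [simp]: "periodic_mod p (\<lambda>_. a)"
  by (simp add: periodic_mod_def)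

lemma periodic_mod_affine:
  assumes "periodic_mod p f"
  shows "periodic_mod p (\<lambda>t. f (a * t + b))"
  unfolding periodic_mod_def
proof (intro allI impI)
  fix t t' assume "int p dvd t - t'"
  then have "int p dvd (a * t + b) - (a * t' + b)"
    by (metis add_diff_cancel_right dvd_mult right_diff_distrib)
  then show "f (a * t + b) = f (a * t' + b)" using periodic_modD[OF assms] by blast
qed

lemma periodic_mod_mult:
  "periodic_mod p f \<Longrightarrow> periodic_mod p g \<Longrightarrow> periodic_mod p (\<lambda>t. f t * g t)"
  unfolding periodic_mod_def by metis

lemma periodic_mod_divide:
  "periodic_mod p f \<Longrightarrow> periodic_mod p g \<Longrightarrow> periodic_mod p (\<lambda>t. f t / g t)"
  unfolding periodic_mod_def by metis

lemma dvd_diff_imp_eq_nat: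
  assumes "x < p" "y < p" "int p dvd (int x - int y)"
  shows "x = y"
  using assms by (metis mod_eq_dvd_iff mod_less of_nat_eq_iff of_nat_mod)

lemma sum_dvd_delta:
  assumes "p > 0"
  shows "(\<Sum>k<p. if int p dvd (int k - a) then f k else 0) = f (nat (a mod int p))"
proof -
  have "int p dvd (int k - a) \<longleftrightarrow> k = nat (a mod int p)" if "k < p" for k
  proof -
    have "int p dvd (int k - a) \<longleftrightarrow> int k = a mod int p"
      using that by (simp add: mod_eq_dvd_iff[symmetric])
    then show ?thesis using assms by auto
  qed
  then have "(\<Sum>k<p. if int p dvd (int k - a) then f k else 0)
      = (\<Sum>k<p. if k = nat (a mod int p) then f k else 0)"
    by (intro sum.cong) auto
  also have "\<dots> = f (nat (a mod int p))"
    using assms by (simp add: nat_less_iff)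
  finally show ?thesis .
qed

lemma coprime_of_prime_not_dvd:
  assumes "prime p" "\<not> int p dvd b"
  shows "coprime b (int p)"
  using assms prime_imp_coprime[of "int p" b] by (simp add: coprime_commute)

lemma prod_periodic_affine_reindex:
  assumes p: "p > 0" and a: "coprime a (int p)" and g: "periodic_mod p g"
  shows "(\<Prod>k<p. g (a * int k + b)) = (\<Prod>q<p. g (int q))"
proof -
  obtain u where u: "[a * u = 1] (mod int p)" using cong_solve_coprime_int[OF a] by blast
  show ?thesis
  proof (rule prod.reindex_bij_witness[where j = "\<lambda>k. nat ((a * int k + b) mod int p)"
        and i = "\<lambda>q. nat ((u * (int q - b)) mod int p)"])
    fix k assume "k \<in> {..<p}"
    have "[(a * int k + b) mod int p = a * int k + b] (mod int p)"
      by (simp add: cong_def)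
    then have "[u * ((a * int k + b) mod int p - b) = u * (a * int k + b - b)] (mod int p)"
      by (intro cong_mult cong_diff) auto
    also have "u * (a * int k + b - b) = (a * u) * int k"
      by (simp add: algebra_simps)
    also have "[(a * u) * int k = 1 * int k] (mod int p)"
      using u by (rule cong_mult) simp
    finally show "nat ((u * (int (nat ((a * int k + b) mod int p)) - b)) mod int p) = k"
      using p \<open>k \<in> {..<p}\<close> by (simp add: cong_def)
    show "nat ((a * int k + b) mod int p) \<in> {..<p}" using p by (simp add: nat_less_iff)
    show "g (int (nat ((a * int k + b) mod int p))) = g (a * int k + b)"
      using p periodic_mod_mod[OF g] by simp
  next
    fix q assume "q \<in> {..<p}"
    have "[(u * (int q - b)) mod int p = u * (int q - b)] (mod int p)"
      by (simp add: cong_def)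
    then have "[a * ((u * (int q - b)) mod int p) + b = a * (u * (int q - b)) + b] (mod int p)"
      by (intro cong_mult cong_add) auto
    also have "a * (u * (int q - b)) + b = (a * u) * (int q - b) + b"
      by (simp add: algebra_simps)
    also have "[(a * u) * (int q - b) + b = 1 * (int q - b) + b] (mod int p)"
      using u by (intro cong_add cong_mult) simp_all
    finally show "nat ((a * int (nat ((u * (int q - b)) mod int p)) + b) mod int p) = q"
      using p \<open>q \<in> {..<p}\<close> by (simp add: cong_def)
    show "nat ((u * (int q - b)) mod int p) \<in> {..<p}" using p by (simp add: nat_less_iff)
  qed
qed

section \<open>Monomial matrices\<close>

text \<open>For \<open>a = 1\<close> it is
  \<open>S\<^sub>f X\<^sup>b\<close>; for \<open>a = -1\<close> it is a diagonal twist of the parity operator \<open>|q\<rangle> \<mapsto> |-q\<rangle>\<close>.\<close>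

definition monomial_mat :: "nat \<Rightarrow> int \<Rightarrow> (int \<Rightarrow> complex) \<Rightarrow> int \<Rightarrow> complex mat" where
  "monomial_mat p a f b = mat p p (\<lambda>(i, j). if int p dvd (int i - a * int j - b) then f (int i) else 0)"

lemma monomial_mat_carrier [simp]: "monomial_mat p a f b \<in> carrier_mat p p"
  by (simp add: monomial_mat_def)

lemma monomial_mat_dim [simp]: "dim_row (monomial_mat p a f b) = p" "dim_col (monomial_mat p a f b) = p"
  by (simp_all add: monomial_mat_def)

lemma monomial_mat_index:
  "i < p \<Longrightarrow> j < p \<Longrightarrow>
     monomial_mat p a f b $$ (i, j) = (if int p dvd (int i - a * int j - b) then f (int i) else 0)"
  by (simp add: monomial_mat_def)

lemma monomial_mat_mult:
  assumes p: "p > 0" and a: "a * a = 1" and g: "periodic_mod p g"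
  shows "monomial_mat p a f b * monomial_mat p a' g b'
       = monomial_mat p (a * a') (\<lambda>t. f t * g (a * (t - b))) (a * b' + b)"
proof (rule eq_matI)
  fix i j assume "i < dim_row (monomial_mat p (a * a') (\<lambda>t. f t * g (a * (t - b))) (a * b' + b))"
    and "j < dim_col (monomial_mat p (a * a') (\<lambda>t. f t * g (a * (t - b))) (a * b' + b))"
  then have i: "i < p" and j: "j < p" by auto
  define k where "k = nat ((a' * int j + b') mod int p)"
  have k: "int p dvd (int k - (a' * int j + b'))"
    using p by (simp add: k_def mod_eq_dvd_iff[symmetric])
  have "(monomial_mat p a f b * monomial_mat p a' g b') $$ (i, j)
      = (\<Sum>l<p. monomial_mat p a f b $$ (i, l) * monomial_mat p a' g b' $$ (l, j))"
    using i j by (simp add: scalar_prod_def lessThan_atLeast0)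
  also have "\<dots> = (\<Sum>l<p. if int p dvd (int l - (a' * int j + b'))
                         then monomial_mat p a f b $$ (i, l) * g (int l) else 0)"
    using i j by (intro sum.cong) (auto simp: monomial_mat_index algebra_simps)
  also have "\<dots> = monomial_mat p a f b $$ (i, k) * g (int k)"
    using p by (subst sum_dvd_delta) (simp_all add: k_def)
  also have "\<dots> = (if int p dvd (int i - (a * a') * int j - (a * b' + b))
                   then f (int i) * g (a * (int i - b)) else 0)"
  proof -
    have "int i - (a * a') * int j - (a * b' + b)
        = (int i - a * int k - b) + a * (int k - (a' * int j + b'))"
      by (simp add: algebra_simps)
    then have same: "int p dvd (int i - a * int k - b)
                \<longleftrightarrow> int p dvd (int i - (a * a') * int j - (a * b' + b))"
      using k by (metis dvd_add_left_iff dvd_mult)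
    have "g (int k) = g (a * (int i - b))" if "int p dvd (int i - a * int k - b)"
    proof -
      have "int k - a * (int i - b) = - a * (int i - a * int k - b)"
        using a by (simp add: algebra_simps)
      then show ?thesis using that periodic_modD[OF g] by (metis dvd_mult)
    qed
    then show ?thesis using same i p by (simp add: monomial_mat_index k_def nat_less_iff)
  qed
  also have "\<dots> = monomial_mat p (a * a') (\<lambda>t. f t * g (a * (t - b))) (a * b' + b) $$ (i, j)"
    using i j by (simp add: monomial_mat_index)
  finally show "(monomial_mat p a f b * monomial_mat p a' g b') $$ (i, j)
      = monomial_mat p (a * a') (\<lambda>t. f t * g (a * (t - b))) (a * b' + b) $$ (i, j)" .
qed auto

lemma monomial_mat_eq_imp_fun_eq:
  assumes p: "p > 0" and a: "a * a = 1" and f: "periodic_mod p f" and g: "periodic_mod p g"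
    and eq: "monomial_mat p a f b = monomial_mat p a g b"
  shows "f t = g t"
proof -
  define i where "i = nat (t mod int p)"
  define j where "j = nat ((a * (int i - b)) mod int p)"
  have i: "i < p" "int i = t mod int p" using p by (auto simp: i_def nat_less_iff)
  have j: "j < p" "int p dvd (int j - a * (int i - b))"
    using p by (auto simp: j_def nat_less_iff mod_eq_dvd_iff[symmetric])
  have "- a * (int j - a * (int i - b)) = (a * a) * (int i - b) - a * int j"
    by (simp add: algebra_simps)
  then have "int i - a * int j - b = - a * (int j - a * (int i - b))"
    using a by simp
  then have "int p dvd (int i - a * int j - b)" using j(2) by simp
  moreover have "monomial_mat p a f b $$ (i, j) = monomial_mat p a g b $$ (i, j)" using eq by simp
  ultimately have "f (int i) = g (int i)" using i j by (simp add: monomial_mat_index)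
  then show ?thesis using i(2) periodic_mod_mod[OF f] periodic_mod_mod[OF g] by metis
qed

lemma monomial_mat_shift_cong:
  assumes "int p dvd (b - b')"
  shows "monomial_mat p a f b = monomial_mat p a f b'"
proof (rule eq_matI)
  fix i j assume "i < dim_row (monomial_mat p a f b')" "j < dim_col (monomial_mat p a f b')"
  then have ij: "i < p" "j < p" by auto
  have "int i - a * int j - b' = (int i - a * int j - b) + (b - b')" by simp
  then have "int p dvd (int i - a * int j - b) \<longleftrightarrow> int p dvd (int i - a * int j - b')"
    using assms by (metis dvd_add_left_iff)
  then show "monomial_mat p a f b $$ (i, j) = monomial_mat p a f b' $$ (i, j)"
    using ij by (simp add: monomial_mat_index)
qed auto

lemma smult_monomial_mat: "z \<cdot>\<^sub>m monomial_mat p a f b = monomial_mat p a (\<lambda>t. z * f t) b"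
  by (rule eq_matI) (auto simp: monomial_mat_def)

lemma monomial_mat_diagonal:
  assumes "i < p" "j < p"
  shows "monomial_mat p 1 f 0 $$ (i, j) = (if i = j then f (int i) else 0)"
  using assms by (auto simp: monomial_mat_index dest: dvd_diff_imp_eq_nat)

lemma one_mat_eq_monomial_mat: "1\<^sub>m p = monomial_mat p 1 (\<lambda>_. 1) 0"
  by (rule eq_matI) (auto simp: monomial_mat_diagonal)

lemma Smat_eq_monomial_mat:
  assumes "p > 0"
  shows "Smat p \<xi> = monomial_mat p 1 (\<lambda>t. \<xi> (nat (t mod int p))) 0"
  by (rule eq_matI) (auto simp: Smat_def monomial_mat_diagonal)

lemma Xmat_power_eq_monomial_mat:
  assumes "p > 1"
  shows "Xmat p ^\<^sub>m b = monomial_mat p 1 (\<lambda>_. 1) (int b)"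
proof (induction b)
  case 0
  then show ?case by (simp add: Xmat_def one_mat_eq_monomial_mat)
next
  case (Suc b)
  have "Xmat p = monomial_mat p 1 (\<lambda>_. 1) 1"
  proof (rule eq_matI)
    fix i j assume "i < dim_row (monomial_mat p 1 (\<lambda>_. 1) 1)" "j < dim_col (monomial_mat p 1 (\<lambda>_. 1) 1)"
    then have ij: "i < p" "j < p" by auto
    have "i = (j + 1) mod p \<longleftrightarrow> int i mod int p = int (j + 1) mod int p"
      using ij by (metis mod_less of_nat_eq_iff of_nat_mod)
    also have "\<dots> \<longleftrightarrow> int p dvd (int i - 1 * int j - 1)"
      by (simp add: mod_eq_dvd_iff algebra_simps)
    finally show "Xmat p $$ (i, j) = monomial_mat p 1 (\<lambda>_. 1) 1 $$ (i, j)"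
      using ij by (simp add: monomial_mat_index Xmat_def)
  qed (auto simp: Xmat_def)
  then have "Xmat p ^\<^sub>m Suc b = monomial_mat p 1 (\<lambda>_. 1) (int b) * monomial_mat p 1 (\<lambda>_. 1) 1"
    using Suc by simp
  also have "\<dots> = monomial_mat p 1 (\<lambda>_. 1) (int (Suc b))"
    using assms by (subst monomial_mat_mult) (auto simp: add.commute)
  finally show ?case .
qed

lemma diagonal_monomial_mat_mult_left:
  assumes "M \<in> carrier_mat p p" "i < p" "j < p"
  shows "(monomial_mat p 1 f 0 * M) $$ (i, j) = f (int i) * M $$ (i, j)"
proof -
  have "(monomial_mat p 1 f 0 * M) $$ (i, j) = (\<Sum>k<p. monomial_mat p 1 f 0 $$ (i, k) * M $$ (k, j))"
    using assms by (simp add: scalar_prod_def lessThan_atLeast0)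
  also have "\<dots> = (\<Sum>k<p. if k = i then f (int i) * M $$ (i, j) else 0)"
    using assms by (intro sum.cong) (auto simp: monomial_mat_diagonal)
  finally show ?thesis using assms by simp
qed

lemma diagonal_monomial_mat_mult_right:
  assumes "M \<in> carrier_mat p p" "i < p" "j < p"
  shows "(M * monomial_mat p 1 f 0) $$ (i, j) = M $$ (i, j) * f (int j)"
proof -
  have "(M * monomial_mat p 1 f 0) $$ (i, j) = (\<Sum>k<p. M $$ (i, k) * monomial_mat p 1 f 0 $$ (k, j))"
    using assms by (simp add: scalar_prod_def lessThan_atLeast0)
  also have "\<dots> = (\<Sum>k<p. if k = j then M $$ (i, j) * f (int j) else 0)"
    using assms by (intro sum.cong) (auto simp: monomial_mat_diagonal)
  finally show ?thesis using assms by simp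
qed

lemma monomial_mat_00:
  "p > 0 \<Longrightarrow> monomial_mat p 1 f b $$ (0, 0) = (if int p dvd b then f 0 else 0)"
  by (simp add: monomial_mat_index)

definition monomial_group :: "nat \<Rightarrow> complex mat set" where
  "monomial_group p = {M. \<exists>f b. M = monomial_mat p 1 f b \<and> periodic_mod p f \<and> (\<forall>t. f t \<noteq> 0)
                         \<and> (\<Prod>q<p. f (int q)) = 1}"

lemma monomial_groupI:
  "periodic_mod p f \<Longrightarrow> \<forall>t. f t \<noteq> 0 \<Longrightarrow> (\<Prod>q<p. f (int q)) = 1 \<Longrightarrow> monomial_mat p 1 f b \<in> monomial_group p"
  unfolding monomial_group_def by blast

lemma monomial_groupE:
  assumes "M \<in> monomial_group p"
  obtains f b where "M = monomial_mat p 1 f b" "periodic_mod p f" "\<forall>t. f t \<noteq> 0"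
    "(\<Prod>q<p. f (int q)) = 1"
  using assms unfolding monomial_group_def by blast

lemma monomial_group_carrier: "M \<in> monomial_group p \<Longrightarrow> M \<in> carrier_mat p p"
  by (auto elim: monomial_groupE)

lemma one_mat_in_monomial_group: "1\<^sub>m p \<in> monomial_group p"
  unfolding one_mat_eq_monomial_mat by (rule monomial_groupI) simp_all

lemma monomial_group_mult:
  assumes p: "p > 0" and "A \<in> monomial_group p" "B \<in> monomial_group p"
  shows "A * B \<in> monomial_group p"
proof -
  obtain f b where A: "A = monomial_mat p 1 f b" "periodic_mod p f" "\<forall>t. f t \<noteq> 0"
    "(\<Prod>q<p. f (int q)) = 1" using \<open>A \<in> monomial_group p\<close> by (rule monomial_groupE)
  obtain g c where B: "B = monomial_mat p 1 g c" "periodic_mod p g" "\<forall>t. g t \<noteq> 0"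
    "(\<Prod>q<p. g (int q)) = 1" using \<open>B \<in> monomial_group p\<close> by (rule monomial_groupE)
  have "(\<Prod>q<p. f (int q) * g (1 * (int q - b))) = 1"
    using prod_periodic_affine_reindex[OF p _ B(2), of 1 "- b"] A(4) B(4)
    by (simp add: prod.distrib)
  then have "monomial_mat p 1 (\<lambda>t. f t * g (1 * (t - b))) (1 * c + b) \<in> monomial_group p"
    using A B periodic_mod_affine[OF B(2), of 1 "- b"] by (intro monomial_groupI periodic_mod_mult) simp_all
  then show ?thesis using A B p by (simp add: monomial_mat_mult)
qed

lemma monomial_group_inverse:
  assumes p: "p > 0" and "A \<in> monomial_group p"
  obtains B where "B \<in> monomial_group p" "A * B = 1\<^sub>m p" "B * A = 1\<^sub>m p"
proof -
  obtain f b where A: "A = monomial_mat p 1 f b" "periodic_mod p f" "\<forall>t. f t \<noteq> 0"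
    "(\<Prod>q<p. f (int q)) = 1" using \<open>A \<in> monomial_group p\<close> by (rule monomial_groupE)
  define g where "g t = 1 / f (t + b)" for t
  have g: "periodic_mod p g"
    unfolding g_def using periodic_mod_affine[OF A(2), of 1 b] by (simp add: periodic_mod_def)
  have "(\<Prod>q<p. g (int q)) = 1"
    using prod_periodic_affine_reindex[OF p _ A(2), of 1 b] A(4) by (simp add: g_def prod_dividef)
  then have "monomial_mat p 1 g (- b) \<in> monomial_group p" using g A(3) by (intro monomial_groupI) (simp_all add: g_def)
  moreover have "A * monomial_mat p 1 g (- b) = 1\<^sub>m p" "monomial_mat p 1 g (- b) * A = 1\<^sub>m p"
    using A g p by (simp_all add: monomial_mat_mult one_mat_eq_monomial_mat g_def)
  ultimately show ?thesis using that by blast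
qed

lemma monomial_group_power:
  assumes p: "p > 0" and A: "A \<in> monomial_group p"
  shows "A ^\<^sub>m k \<in> monomial_group p"
proof (induction k)
  case 0
  then show ?case using monomial_group_carrier[OF A] one_mat_in_monomial_group by simp
next
  case (Suc k)
  then show ?case using monomial_group_mult[OF p _ A] by simp
qed

lemma monomial_group_nonzero_entry:
  assumes p: "p > 0" and "A \<in> monomial_group p"
  shows "\<exists>i j. i < p \<and> j < p \<and> A $$ (i, j) \<noteq> 0"
proof -
  obtain f b where A: "A = monomial_mat p 1 f b" "\<forall>t. f t \<noteq> 0" using \<open>A \<in> monomial_group p\<close> by (rule monomial_groupE)
  define i where "i = nat (b mod int p)"
  have "i < p" "int p dvd (int i - 1 * int 0 - b)"
    using p by (auto simp: i_def nat_less_iff mod_eq_dvd_iff[symmetric])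
  then show ?thesis using A p by (intro exI[of _ i] exI[of _ 0]) (simp add: monomial_mat_index)
qed

lemma KQ_subset_monomial_group:
  assumes p: "p > 1" and Q: "Q \<subseteq> Tgrp p"
  shows "KQ p Q \<subseteq> monomial_group p"
proof
  fix A assume "A \<in> KQ p Q"
  then show "A \<in> monomial_group p"
  proof (induction rule: KQ.induct)
    case one
    then show ?case by (rule one_mat_in_monomial_group)
  next
    case (gen S b)
    obtain \<xi> where S: "S = Smat p \<xi>" "\<forall>q<p. norm (\<xi> q) = 1" "(\<Prod>q<p. \<xi> q) = 1"
      using gen Q by (auto simp: Tgrp_def)
    define f where "f = (\<lambda>t. \<xi> (nat (t mod int p)))"
    have "periodic_mod p f" unfolding periodic_mod_def f_def by (metis mod_eq_dvd_iff)
    moreover have "f t \<noteq> 0" for t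
      using S(2)[rule_format, of "nat (t mod int p)"] p by (auto simp: f_def nat_less_iff)
    moreover have "S = monomial_mat p 1 f 0"
      using S p by (simp add: Smat_eq_monomial_mat f_def)
    ultimately have "S \<in> monomial_group p"
      using S(3) by (simp add: monomial_groupI f_def)
    moreover have "Xmat p ^\<^sub>m b \<in> monomial_group p"
      unfolding Xmat_power_eq_monomial_mat[OF p] by (rule monomial_groupI) simp_all
    ultimately show ?case using monomial_group_mult p by simp
  next
    case (mult A B)
    then show ?case using monomial_group_mult p by simp
  next
    case (inv A B)
    have p0: "p > 0" using p by simp
    obtain C where C: "C \<in> monomial_group p" "C * A = 1\<^sub>m p"
      using monomial_group_inverse[OF p0 inv.IH] by blast
    have "B = (C * A) * B" using C inv by simp
    also have "\<dots> = C * (A * B)"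
      using inv C monomial_group_carrier by (metis assoc_mult_mat)
    also have "\<dots> = C" using inv C(1) monomial_group_carrier[OF C(1)] by simp
    finally show ?case using C by simp
  qed
qed

section \<open>Weyl operators in a diagonal frame\<close>

lemma residue_quotient_pred:
  assumes p: "p > 0" and u: "[b * u = 1] (mod int p)"
  defines "n \<equiv> \<lambda>t. nat ((t * u) mod int p)"
  shows "n (t - b) = (if n t = 0 then p - 1 else n t - 1)"
proof -
  have n: "int (n t) = (t * u) mod int p" "n t < p" for t
    using p by (auto simp: n_def nat_less_iff)
  have n_cong: "[int (n t) = t * u] (mod int p)" for t
    by (simp add: n(1) cong_def)
  have "[int (n (t - b)) = (t - b) * u] (mod int p)" by (rule n_cong)
  also have "(t - b) * u = t * u - b * u" by (simp add: algebra_simps)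
  also have "[t * u - b * u = int (n t) - 1] (mod int p)"
    by (intro cong_diff u) (simp add: cong_sym n_cong)
  finally have pred: "[int (n (t - b)) = int (n t) - 1] (mod int p)" .
  show ?thesis
  proof (cases "n t")
    case 0
    have "[int (n (t - b)) = - 1] (mod int p)" using pred 0 by simp
    also have "[- 1 = int (p - 1)] (mod int p)"
      using p by (simp add: cong_iff_dvd_diff of_nat_diff)
    finally have "[n (t - b) = p - 1] (mod p)" by (simp only: cong_int_iff)
    then show ?thesis using 0 n(2) p cong_less_modulus_unique_nat by simp
  next
    case (Suc m)
    have "[n (t - b) = m] (mod p)" using pred Suc by (simp add: cong_int_iff[symmetric])
    then show ?thesis using Suc n(2)[of t] n(2)[of "t - b"] cong_less_modulus_unique_nat by simp
  qed
qed

text \<open>A non-diagonal \<open>S\<^sub>\<xi> X\<^sup>b\<close> is conjugate to \<open>X\<^sup>b\<close> by the diagonal matrix \<open>S\<^sub>d\<close>; the condition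
  \<open>\<Prod> \<xi> = 1\<close> is exactly what lets the recursion for \<open>d\<close> close up after \<open>p\<close> steps.\<close>

lemma monomial_frame_exists:
  fixes \<xi> :: "int \<Rightarrow> 'a :: semidom"
  assumes p: "p > 0" and b: "coprime b (int p)"
    and \<xi>: "periodic_mod p \<xi>" "\<forall>t. \<xi> t \<noteq> 0" and prod: "(\<Prod>q<p. \<xi> (int q)) = 1"
  obtains d where "periodic_mod p d" "\<forall>t. d t \<noteq> 0" "\<And>t. d t = \<xi> t * d (t - b)"
proof -
  obtain u where u: "[b * u = 1] (mod int p)" using cong_solve_coprime_int[OF b] by blast
  define n where "n t = nat ((t * u) mod int p)" for t
  \<comment> \<open>\<open>n t\<close> is the residue of \<open>t / b\<close>, so \<open>d t\<close> multiplies up \<open>\<xi>\<close> along \<open>b, 2 b, \<dots>, t\<close>.\<close>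
  define d where "d t = (\<Prod>k<n t. \<xi> (int (Suc k) * b))" for t
  have n_pred: "n (t - b) = (if n t = 0 then p - 1 else n t - 1)" for t
    unfolding n_def by (rule residue_quotient_pred[OF p u])
  have nb: "[int (n t) * b = t] (mod int p)" for t
  proof -
    have "[int (n t) * b = (t * u) * b] (mod int p)"
      using p by (intro cong_mult) (simp_all add: n_def cong_def)
    also have "(t * u) * b = t * (b * u)" by (simp add: ac_simps)
    also have "[t * (b * u) = t * 1] (mod int p)" by (intro cong_mult u) simp
    finally show ?thesis by simp
  qed
  have "periodic_mod p d"
    unfolding periodic_mod_def
  proof (intro allI impI)
    fix t t' :: int assume "int p dvd t - t'"
    then have "n t = n t'" unfolding n_def by (metis mod_eq_dvd_iff mod_mult_cong)
    then show "d t = d t'" by (simp add: d_def)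
  qed
  moreover have "\<forall>t. d t \<noteq> 0" using \<xi>(2) by (simp add: d_def prod_zero_iff)
  moreover have "d t = \<xi> t * d (t - b)" for t
  proof (cases "n t")
    case (Suc m)
    have "\<xi> (int (Suc m) * b) = \<xi> t"
      using nb[of t] Suc periodic_modD[OF \<xi>(1)] by (simp add: cong_iff_dvd_diff)
    then show ?thesis using n_pred[of t] by (simp add: d_def Suc mult.commute)
  next
    case 0
    have t0: "int p dvd t" using nb[of t] 0 by (simp add: cong_iff_dvd_diff)
    have "\<xi> t * d (t - b) = \<xi> 0 * (\<Prod>k<p - 1. \<xi> (int (Suc k) * b))"
      using n_pred[of t] 0 periodic_modD[OF \<xi>(1), of t 0] t0 by (simp add: d_def)
    also have "\<dots> = (\<Prod>k<Suc (p - 1). \<xi> (int k * b))"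
      by (simp only: prod.lessThan_Suc_shift) simp
    also have "\<dots> = (\<Prod>k<p. \<xi> (b * int k + 0))"
      using p by (simp add: mult.commute)
    also have "\<dots> = 1"
      using prod_periodic_affine_reindex[OF p b \<xi>(1), of 0] prod by simp
    finally show ?thesis by (simp add: d_def 0)
  qed
  ultimately show ?thesis using that by blast
qed

lemma scaled_character_of_shift_eigenfunction:
  fixes \<chi> :: "int \<Rightarrow> 'a :: comm_monoid_mult"
  assumes p: "p > 0" and b: "coprime b (int p)" and \<chi>: "periodic_mod p \<chi>"
    and shift: "\<And>t. \<chi> (t - b) = \<kappa> * \<chi> t"
  shows "\<chi> (s + t) * \<chi> 0 = \<chi> s * \<chi> t"
proof -
  have iter: "\<chi> (t - int n * b) = \<kappa> ^ n * \<chi> t" for n t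
  proof (induction n)
    case (Suc n)
    have "\<chi> (t - int (Suc n) * b) = \<chi> ((t - int n * b) - b)" by (simp add: algebra_simps)
    then show ?case using Suc shift by (simp add: mult.assoc)
  qed simp
  obtain u where u: "[b * u = 1] (mod int p)" using cong_solve_coprime_int[OF b] by blast
  define n where "n = nat ((- s * u) mod int p)"
  have "[s + int n * b = s + (- s * u) * b] (mod int p)"
    using p by (intro cong_add cong_mult) (simp_all add: n_def cong_def)
  also have "s + (- s * u) * b = s * (1 - b * u)" by (simp add: algebra_simps)
  also have "[s * (1 - b * u) = s * 0] (mod int p)"
    using u by (intro cong_mult) (simp_all add: cong_iff_dvd_diff dvd_diff_commute)
  finally have n: "int p dvd (s + int n * b)" by (simp add: cong_0_iff)
  have "\<chi> (s + t) = \<kappa> ^ n * \<chi> t"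
    using n iter[of t n] periodic_modD[OF \<chi>, of "s + t" "t - int n * b"] by simp
  moreover have "\<chi> s = \<kappa> ^ n * \<chi> 0"
    using n iter[of 0 n] periodic_modD[OF \<chi>, of s "0 - int n * b"] by simp
  ultimately show ?thesis by (simp add: ac_simps)
qed

definition scaled_character :: "nat \<Rightarrow> (int \<Rightarrow> complex) \<Rightarrow> bool" where
  "scaled_character p \<chi> \<longleftrightarrow>
     periodic_mod p \<chi> \<and> (\<forall>t. \<chi> t \<noteq> 0) \<and> (\<forall>s t. \<chi> (s + t) * \<chi> 0 = \<chi> s * \<chi> t)"

text \<open>\<open>weyl_in_frame p d H\<close>: conjugated by \<open>S\<^sub>d\<close>, the matrix \<open>H\<close> becomes \<open>\<chi> X\<^sup>c\<close> with \<open>\<chi>\<close> a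
  scaled character, i.e.\ a scalar multiple of a Weyl operator \<open>Z\<^sup>a X\<^sup>c\<close>.\<close>

definition weyl_in_frame :: "nat \<Rightarrow> (int \<Rightarrow> complex) \<Rightarrow> complex mat \<Rightarrow> bool" where
  "weyl_in_frame p d H \<longleftrightarrow>
     (\<exists>\<eta> c. H = monomial_mat p 1 \<eta> c \<and> periodic_mod p \<eta> \<and> (\<forall>t. \<eta> t \<noteq> 0)
        \<and> scaled_character p (\<lambda>t. \<eta> t * d (t - c) / d t))"

text \<open>The parity operator \<open>|q\<rangle> \<mapsto> |-q\<rangle>\<close> conjugated by \<open>S\<^sub>d\<close>; it inverts every Weyl operator of
  the frame up to a scalar.\<close>

definition frame_parity :: "nat \<Rightarrow> (int \<Rightarrow> complex) \<Rightarrow> complex mat" where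
  "frame_parity p d = monomial_mat p (-1) (\<lambda>t. d t / d (- t)) 0"

lemma weyl_in_frameI:
  assumes p: "p > 0" and b: "coprime b (int p)"
    and \<xi>: "periodic_mod p \<xi>" "\<forall>t. \<xi> t \<noteq> 0"
    and d: "periodic_mod p d" "\<forall>t. d t \<noteq> 0" "\<And>t. d t = \<xi> t * d (t - b)"
    and \<eta>: "periodic_mod p \<eta>" "\<forall>t. \<eta> t \<noteq> 0"
    and comm: "monomial_mat p 1 \<eta> c * monomial_mat p 1 \<xi> b = \<mu> \<cdot>\<^sub>m (monomial_mat p 1 \<xi> b * monomial_mat p 1 \<eta> c)"
  shows "weyl_in_frame p d (monomial_mat p 1 \<eta> c)"
proof -
  have eq: "monomial_mat p 1 (\<lambda>t. \<eta> t * \<xi> (t - c)) (b + c)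
      = monomial_mat p 1 (\<lambda>t. \<mu> * (\<xi> t * \<eta> (t - b))) (b + c)"
    using comm p \<xi>(1) \<eta>(1) by (simp add: monomial_mat_mult smult_monomial_mat add.commute)
  have "periodic_mod p (\<lambda>t. \<eta> t * \<xi> (t - c))"
    using periodic_mod_mult[OF \<eta>(1) periodic_mod_affine[OF \<xi>(1), of 1 "- c"]] by simp
  moreover have "periodic_mod p (\<lambda>t. \<mu> * (\<xi> t * \<eta> (t - b)))"
    using periodic_mod_mult[OF periodic_mod_const
        periodic_mod_mult[OF \<xi>(1) periodic_mod_affine[OF \<eta>(1), of 1 "- b"]]] by simp
  ultimately have E: "\<eta> t * \<xi> (t - c) = \<mu> * (\<xi> t * \<eta> (t - b))" for t
    using monomial_mat_eq_imp_fun_eq[OF p _ _ _ eq] by simp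
  have "\<mu> \<noteq> 0" using E[of 0] \<eta>(2) \<xi>(2) by auto
  define \<chi> where "\<chi> t = \<eta> t * d (t - c) / d t" for t
  have "\<chi> (t - b) = (1 / \<mu>) * \<chi> t" for t
  proof -
    have "\<chi> t = \<eta> t * \<xi> (t - c) * d (t - c - b) / (\<xi> t * d (t - b))"
      unfolding \<chi>_def using d(3)[of t] d(3)[of "t - c"] by simp
    also have "\<dots> = \<mu> * (\<eta> (t - b) * d (t - b - c) / d (t - b))"
      using E \<xi>(2) d(2) by (simp add: field_simps)
    finally show ?thesis using \<open>\<mu> \<noteq> 0\<close> by (simp add: \<chi>_def)
  qed
  moreover have "periodic_mod p \<chi>"
    unfolding \<chi>_def
    using periodic_mod_affine[OF d(1), of 1 "- c"] d(1) \<eta>(1)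
    by (simp add: periodic_mod_mult periodic_mod_divide)
  ultimately have "\<chi> (s + t) * \<chi> 0 = \<chi> s * \<chi> t" for s t
    using scaled_character_of_shift_eigenfunction[OF p b] by blast
  then have "scaled_character p \<chi>"
    using \<open>periodic_mod p \<chi>\<close> \<eta>(2) d(2) by (simp add: scaled_character_def \<chi>_def)
  then show ?thesis
    unfolding weyl_in_frame_def \<chi>_def using \<eta> by blast
qed

lemma weyl_in_frame_quasi_commute:
  assumes p: "p > 0" and d: "\<forall>t. d t \<noteq> 0"
    and H1: "weyl_in_frame p d H1" and H2: "weyl_in_frame p d H2"
  obtains \<mu> where "H1 * H2 = \<mu> \<cdot>\<^sub>m (H2 * H1)"
proof -
  obtain \<eta>1 c1 where h1: "H1 = monomial_mat p 1 \<eta>1 c1" "periodic_mod p \<eta>1"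
    "scaled_character p (\<lambda>t. \<eta>1 t * d (t - c1) / d t)"
    using H1 unfolding weyl_in_frame_def by blast
  obtain \<eta>2 c2 where h2: "H2 = monomial_mat p 1 \<eta>2 c2" "periodic_mod p \<eta>2"
    "scaled_character p (\<lambda>t. \<eta>2 t * d (t - c2) / d t)"
    using H2 unfolding weyl_in_frame_def by blast
  define \<chi>1 where "\<chi>1 t = \<eta>1 t * d (t - c1) / d t" for t
  define \<chi>2 where "\<chi>2 t = \<eta>2 t * d (t - c2) / d t" for t
  have c1: "\<forall>t. \<chi>1 t \<noteq> 0" "\<And>s t. \<chi>1 (s + t) * \<chi>1 0 = \<chi>1 s * \<chi>1 t"
    using h1(3) unfolding scaled_character_def \<chi>1_def by auto
  have c2: "\<forall>t. \<chi>2 t \<noteq> 0" "\<And>s t. \<chi>2 (s + t) * \<chi>2 0 = \<chi>2 s * \<chi>2 t"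
    using h2(3) unfolding scaled_character_def \<chi>2_def by auto
  have e1: "\<eta>1 t = \<chi>1 t * d t / d (t - c1)" for t using d by (simp add: \<chi>1_def)
  have e2: "\<eta>2 t = \<chi>2 t * d t / d (t - c2)" for t using d by (simp add: \<chi>2_def)
  define \<mu> where "\<mu> = \<chi>1 c2 * \<chi>2 0 / (\<chi>1 0 * \<chi>2 c1)"
  have "\<eta>1 t * \<eta>2 (t - c1) = \<mu> * (\<eta>2 t * \<eta>1 (t - c2))" for t
  proof -
    have "\<chi>1 t * \<chi>2 (t - c1) = \<mu> * (\<chi>2 t * \<chi>1 (t - c2))"
    proof -
      have "\<mu> * (\<chi>2 t * \<chi>1 (t - c2))
          = (\<chi>1 (t - c2) * \<chi>1 c2) * (\<chi>2 t * \<chi>2 0) / (\<chi>1 0 * \<chi>2 c1)"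
        by (simp add: \<mu>_def field_simps)
      also have "\<dots> = (\<chi>1 t * \<chi>1 0) * (\<chi>2 (t - c1) * \<chi>2 c1) / (\<chi>1 0 * \<chi>2 c1)"
        using c1(2)[of "t - c2" c2] c2(2)[of "t - c1" c1] by simp
      also have "\<dots> = \<chi>1 t * \<chi>2 (t - c1)" using c1(1) c2(1) by (simp add: field_simps)
      finally show ?thesis by simp
    qed
    moreover have "t - c1 - c2 = t - c2 - c1" by simp
    ultimately show ?thesis
      unfolding e1 e2 using d by (simp add: field_simps)
  qed
  then have "H1 * H2 = \<mu> \<cdot>\<^sub>m (H2 * H1)"
    using p h1(1,2) h2(1,2) by (simp add: monomial_mat_mult smult_monomial_mat add.commute)
  then show ?thesis by (rule that)
qed

lemma frame_parity_carrier: "frame_parity p d \<in> carrier_mat p p"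
  by (simp add: frame_parity_def)

lemma frame_parity_00: "p > 0 \<Longrightarrow> \<forall>t. d t \<noteq> 0 \<Longrightarrow> frame_parity p d $$ (0, 0) \<noteq> 0"
  by (simp add: frame_parity_def monomial_mat_index)

lemma weyl_in_frame_parity:
  assumes p: "p > 0" and d: "periodic_mod p d" "\<forall>t. d t \<noteq> 0" and H: "weyl_in_frame p d H"
  obtains l where "H * frame_parity p d * H = l \<cdot>\<^sub>m frame_parity p d"
proof -
  obtain \<eta> c where h: "H = monomial_mat p 1 \<eta> c" "periodic_mod p \<eta>"
    "scaled_character p (\<lambda>t. \<eta> t * d (t - c) / d t)"
    using H unfolding weyl_in_frame_def by blast
  define \<chi> where "\<chi> t = \<eta> t * d (t - c) / d t" for t
  have ch: "\<And>s t. \<chi> (s + t) * \<chi> 0 = \<chi> s * \<chi> t"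
    using h(3) unfolding scaled_character_def \<chi>_def by auto
  have e: "\<eta> t = \<chi> t * d t / d (t - c)" for t using d by (simp add: \<chi>_def)
  define \<rho> where "\<rho> t = d t / d (- t)" for t
  have \<rho>: "periodic_mod p \<rho>"
    unfolding \<rho>_def using periodic_mod_affine[OF d(1), of "-1" 0] d(1)
    by (simp add: periodic_mod_divide)
  have "\<eta> t * \<rho> (t - c) * \<eta> (- (t - c)) = (\<chi> c * \<chi> 0) * \<rho> t" for t
  proof -
    have "\<eta> t * \<rho> (t - c) * \<eta> (- (t - c)) = \<chi> t * \<chi> (c - t) * \<rho> t"
      unfolding e[of t] e[of "- (t - c)"] \<rho>_def using d(2) by (simp add: field_simps)
    then show ?thesis using ch[of t "c - t"] by simp
  qed
  then have "H * frame_parity p d * H = (\<chi> c * \<chi> 0) \<cdot>\<^sub>m frame_parity p d"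
    using p h(1,2) \<rho> by (simp add: frame_parity_def monomial_mat_mult smult_monomial_mat \<rho>_def[symmetric])
  then show ?thesis by (rule that)
qed

section \<open>The phase of a monomial matrix\<close>

definition quasi_commute :: "complex mat \<Rightarrow> complex mat \<Rightarrow> bool" where
  "quasi_commute G H \<longleftrightarrow> (\<exists>\<mu>. G * H = \<mu> \<cdot>\<^sub>m (H * G))"

definition quasi_centralizer :: "nat \<Rightarrow> complex mat \<Rightarrow> complex mat set" where
  "quasi_centralizer p M = {H \<in> monomial_group p. quasi_commute H M}"

lemma quasi_commute_refl: "quasi_commute G G"
  unfolding quasi_commute_def by (rule exI[of _ 1]) simp

lemma monomial_group_commutator_nonzero:
  assumes p: "p > 0" and G: "G \<in> monomial_group p" and H: "H \<in> monomial_group p"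
    and comm: "G * H = \<mu> \<cdot>\<^sub>m (H * G)"
  shows "\<mu> \<noteq> 0"
proof
  assume "\<mu> = 0"
  then have "G * H = 0\<^sub>m p p"
    using comm monomial_group_carrier[OF G] monomial_group_carrier[OF H] by (intro eq_matI) auto
  then show False
    using monomial_group_nonzero_entry[OF p monomial_group_mult[OF p G H]] by auto
qed

lemma quasi_commute_sym:
  assumes p: "p > 0" and G: "G \<in> monomial_group p" and H: "H \<in> monomial_group p"
    and "quasi_commute G H"
  shows "quasi_commute H G"
proof -
  obtain \<mu> where comm: "G * H = \<mu> \<cdot>\<^sub>m (H * G)" using assms(4) unfolding quasi_commute_def by blast
  have "\<mu> \<noteq> 0" by (rule monomial_group_commutator_nonzero[OF p G H comm])
  then have "H * G = (1 / \<mu>) \<cdot>\<^sub>m (G * H)" using comm by (simp add: smult_smult_mat)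
  then show ?thesis unfolding quasi_commute_def by blast
qed

text \<open>This is where the primality of \<open>p\<close> enters: the shift of a non-diagonal element generates
  \<open>\<int>\<^sub>p\<close>.\<close>

lemma quasi_centralizer_weyl_frame:
  assumes p: "prime p" and G: "G \<in> monomial_group p" and off_diag: "G $$ (0, 0) = 0"
  obtains d where "periodic_mod p d" "\<forall>t. d t \<noteq> 0"
    "\<forall>H\<in>quasi_centralizer p G. weyl_in_frame p d H"
proof -
  have p0: "p > 0" using p prime_gt_0_nat by blast
  obtain \<xi> b where g: "G = monomial_mat p 1 \<xi> b" "periodic_mod p \<xi>" "\<forall>t. \<xi> t \<noteq> 0"
    "(\<Prod>q<p. \<xi> (int q)) = 1" using G by (rule monomial_groupE)
  have b: "coprime b (int p)"
    using off_diag g p0 by (intro coprime_of_prime_not_dvd p) (auto simp: monomial_mat_00)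
  obtain d where d: "periodic_mod p d" "\<forall>t. d t \<noteq> 0" "\<And>t. d t = \<xi> t * d (t - b)"
    using monomial_frame_exists[OF p0 b g(2,3,4)] by blast
  have "weyl_in_frame p d H" if "H \<in> quasi_centralizer p G" for H
  proof -
    have "H \<in> monomial_group p" using that by (simp add: quasi_centralizer_def)
    then obtain \<eta> c where h: "H = monomial_mat p 1 \<eta> c" "periodic_mod p \<eta>" "\<forall>t. \<eta> t \<noteq> 0"
      by (rule monomial_groupE)
    have "quasi_commute H G" using that by (simp add: quasi_centralizer_def)
    then obtain \<mu> where "H * G = \<mu> \<cdot>\<^sub>m (G * H)" unfolding quasi_commute_def by blast
    then show ?thesis
      unfolding h(1) using weyl_in_frameI[OF p0 b g(2,3) d h(2,3)] g(1) h(1) by blast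
  qed
  then show ?thesis using that d by blast
qed

definition parity_phase :: "complex mat \<Rightarrow> complex mat \<Rightarrow> complex" where
  "parity_phase R M = (SOME l. M * R * M = l \<cdot>\<^sub>m R)"

definition class_parity :: "nat \<Rightarrow> complex mat set \<Rightarrow> complex mat" where
  "class_parity p C =
     (SOME R. R \<in> carrier_mat p p \<and> R $$ (0, 0) \<noteq> 0 \<and> (\<forall>H\<in>C. \<exists>l. H * R * H = l \<cdot>\<^sub>m R))"

lemma parity_phase_eq:
  assumes p: "p > 0" and R: "R \<in> carrier_mat p p" "R $$ (0, 0) \<noteq> 0"
    and eq: "M * R * M = l \<cdot>\<^sub>m R"
  shows "parity_phase R M = l"
proof -
  have "M * R * M = parity_phase R M \<cdot>\<^sub>m R" unfolding parity_phase_def using eq by (rule someI)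
  then show ?thesis using eq R p smult_mat_cancel[of R 0 0] by auto
qed

lemma parity_phase_mult:
  fixes R G H :: "complex mat"
  assumes R: "R \<in> carrier_mat p p" and G: "G \<in> carrier_mat p p" and H: "H \<in> carrier_mat p p"
    and a: "G * R * G = a \<cdot>\<^sub>m R" and b: "H * R * H = b \<cdot>\<^sub>m R" and comm: "G * H = \<mu> \<cdot>\<^sub>m (H * G)"
  shows "(G * H) * R * (G * H) = (\<mu> * a * b) \<cdot>\<^sub>m R"
proof -
  have "(G * H) * R * (G * H) = (\<mu> \<cdot>\<^sub>m (H * G)) * R * (G * H)" using comm by simp
  also have "\<dots> = \<mu> \<cdot>\<^sub>m (H * (G * R * G) * H)"
    using R G H by (simp add: mult_smult_assoc_mat[of _ p p _ p] assoc_mult_mat[of _ p p _ p _ p])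
  also have "H * (G * R * G) * H = a \<cdot>\<^sub>m (H * R * H)"
    unfolding a using R H
    by (simp add: mult_smult_distrib[of _ p p _ p] mult_smult_assoc_mat[of _ p p _ p])
  finally show ?thesis unfolding b by (simp add: smult_smult_mat mult.assoc)
qed

lemma diagonal_parity_phase:
  assumes p: "p > 0" and c: "int p dvd c"
    and R: "R \<in> carrier_mat p p" "R $$ (0, 0) \<noteq> 0"
    and eq: "monomial_mat p 1 \<eta> c * R * monomial_mat p 1 \<eta> c = l \<cdot>\<^sub>m R"
  shows "l = \<eta> 0 ^ 2"
proof -
  define D where "D = monomial_mat p 1 \<eta> 0"
  have "monomial_mat p 1 \<eta> c = D" unfolding D_def using c by (intro monomial_mat_shift_cong) simp
  then have "l * R $$ (0, 0) = (D * R * D) $$ (0, 0)" using eq R p by simp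
  also have "\<dots> = (D * R) $$ (0, 0) * \<eta> 0"
    using diagonal_monomial_mat_mult_right[of "D * R" p 0 0 \<eta>] p R mult_carrier_mat[of D p p R p]
    by (simp add: D_def)
  also have "(D * R) $$ (0, 0) = \<eta> 0 * R $$ (0, 0)"
    using diagonal_monomial_mat_mult_left[of R p 0 0 \<eta>] p R by (simp add: D_def)
  finally show ?thesis using R by (simp add: power2_eq_square)
qed

lemma class_parity_spec:
  assumes p: "prime p" and G: "G \<in> monomial_group p" and off_diag: "G $$ (0, 0) = 0"
  defines "R \<equiv> class_parity p (quasi_centralizer p G)"
  shows "R \<in> carrier_mat p p" "R $$ (0, 0) \<noteq> 0"
    and "\<And>H. H \<in> quasi_centralizer p G \<Longrightarrow> H * R * H = parity_phase R H \<cdot>\<^sub>m R"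
proof -
  have p0: "p > 0" using p prime_gt_0_nat by blast
  obtain d where d: "periodic_mod p d" "\<forall>t. d t \<noteq> 0"
    "\<forall>H\<in>quasi_centralizer p G. weyl_in_frame p d H"
    using quasi_centralizer_weyl_frame[OF p G off_diag] by blast
  have "\<exists>l. H * frame_parity p d * H = l \<cdot>\<^sub>m frame_parity p d"
    if "H \<in> quasi_centralizer p G" for H
  proof -
    have "weyl_in_frame p d H" using d(3) that by blast
    then obtain l where "H * frame_parity p d * H = l \<cdot>\<^sub>m frame_parity p d"
      by (rule weyl_in_frame_parity[OF p0 d(1,2)])
    then show ?thesis by blast
  qed
  then have "\<exists>R. R \<in> carrier_mat p p \<and> R $$ (0, 0) \<noteq> 0
      \<and> (\<forall>H\<in>quasi_centralizer p G. \<exists>l. H * R * H = l \<cdot>\<^sub>m R)"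
    using frame_parity_carrier[of p d] frame_parity_00[OF p0 d(2)] by (intro exI[of _ "frame_parity p d"]) simp
  then have "R \<in> carrier_mat p p \<and> R $$ (0, 0) \<noteq> 0
      \<and> (\<forall>H\<in>quasi_centralizer p G. \<exists>l. H * R * H = l \<cdot>\<^sub>m R)"
    unfolding R_def class_parity_def by (rule someI_ex)
  then have R: "R \<in> carrier_mat p p" "R $$ (0, 0) \<noteq> 0"
    "\<forall>H\<in>quasi_centralizer p G. \<exists>l. H * R * H = l \<cdot>\<^sub>m R"
    by auto
  then show "R \<in> carrier_mat p p" "R $$ (0, 0) \<noteq> 0" by auto
  fix H assume "H \<in> quasi_centralizer p G"
  then obtain l where "H * R * H = l \<cdot>\<^sub>m R" using R(3) by blast
  then show "H * R * H = parity_phase R H \<cdot>\<^sub>m R" using parity_phase_eq[OF p0 R(1,2)] by simp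
qed

lemma quasi_centralizer_eq:
  assumes p: "prime p" and G: "G \<in> monomial_group p" "G $$ (0, 0) = 0"
    and H: "H \<in> quasi_centralizer p G" "H $$ (0, 0) = 0"
  shows "quasi_centralizer p H = quasi_centralizer p G"
proof -
  have p0: "p > 0" using p prime_gt_0_nat by blast
  have sub: "quasi_centralizer p G \<subseteq> quasi_centralizer p H"
    if G: "G \<in> monomial_group p" "G $$ (0, 0) = 0" and H: "H \<in> quasi_centralizer p G" for G H
  proof
    obtain d where d: "\<forall>t. d t \<noteq> 0" "\<forall>H\<in>quasi_centralizer p G. weyl_in_frame p d H"
      using quasi_centralizer_weyl_frame[OF p G] by blast
    fix K assume K: "K \<in> quasi_centralizer p G"
    obtain \<mu> where "K * H = \<mu> \<cdot>\<^sub>m (H * K)"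
      using weyl_in_frame_quasi_commute[OF p0 d(1)] d(2) K H by blast
    then show "K \<in> quasi_centralizer p H"
      using K unfolding quasi_centralizer_def quasi_commute_def by blast
  qed
  have "H \<in> monomial_group p" using H by (simp add: quasi_centralizer_def)
  moreover have "G \<in> quasi_centralizer p H"
    using G H quasi_commute_sym[OF p0 _ G(1)] calculation by (simp add: quasi_centralizer_def)
  ultimately show ?thesis using sub[OF G H(1)] sub[OF _ H(2)] by blast
qed

text \<open>\<open>M R M = \<lambda> R\<close> for a parity operator \<open>R\<close> shared by the whole quasi-centralizer of \<open>M\<close>,
  and \<open>\<lambda> = M\<^sub>0\<^sub>0\<^sup>2\<close> for diagonal \<open>M\<close>. For odd \<open>p\<close> the exponent \<open>(p + 1) div 2\<close> inverts \<open>2\<close> modulo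
  \<open>p\<close>, which undoes the squaring on the scalar matrices \<open>\<omega>^c 1\<close>.\<close>

definition monomial_phase :: "nat \<Rightarrow> complex mat \<Rightarrow> complex" where
  "monomial_phase p M =
     (if M $$ (0, 0) \<noteq> 0 then M $$ (0, 0) ^ 2
      else parity_phase (class_parity p (quasi_centralizer p M)) M) ^ ((p + 1) div 2)"

lemma monomial_phase_in_quasi_centralizer:
  assumes p: "prime p" and G: "G \<in> monomial_group p" "G $$ (0, 0) = 0"
    and M: "M \<in> quasi_centralizer p G"
  shows "monomial_phase p M
       = parity_phase (class_parity p (quasi_centralizer p G)) M ^ ((p + 1) div 2)"
proof (cases "M $$ (0, 0) = 0")
  case True
  then show ?thesis using quasi_centralizer_eq[OF p G M] by (simp add: monomial_phase_def)
next
  case False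
  have p0: "p > 0" using p prime_gt_0_nat by blast
  define R where "R = class_parity p (quasi_centralizer p G)"
  note R = class_parity_spec[OF p G, folded R_def]
  have "M \<in> monomial_group p" using M by (simp add: quasi_centralizer_def)
  then obtain \<eta> c where h: "M = monomial_mat p 1 \<eta> c" "\<forall>t. \<eta> t \<noteq> 0"
    by (rule monomial_groupE)
  have c: "int p dvd c" using False h p0 by (simp add: monomial_mat_00 split: if_splits)
  have "M $$ (0, 0) = \<eta> 0" using h c p0 by (simp add: monomial_mat_00)
  moreover have "parity_phase R M = \<eta> 0 ^ 2"
    using diagonal_parity_phase[OF p0 c R(1,2)] R(3)[OF M] h(1) by simp
  ultimately show ?thesis using False by (simp add: monomial_phase_def R_def)
qed

lemma monomial_phase_mult_in_quasi_centralizer: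
  assumes p: "prime p" and K: "K \<in> monomial_group p" "K $$ (0, 0) = 0"
    and in_K: "G \<in> quasi_centralizer p K" "H \<in> quasi_centralizer p K"
    and comm: "G * H = \<mu> \<cdot>\<^sub>m (H * G)"
    and GH_in_K: "G * H \<in> quasi_centralizer p K"
  shows "monomial_phase p (G * H) = \<mu> ^ ((p + 1) div 2) * monomial_phase p G * monomial_phase p H"
proof -
  have p0: "p > 0" using p prime_gt_0_nat by blast
  define R where "R = class_parity p (quasi_centralizer p K)"
  note R = class_parity_spec[OF p K, folded R_def]
  have "G \<in> carrier_mat p p" "H \<in> carrier_mat p p"
    using in_K monomial_group_carrier by (auto simp: quasi_centralizer_def)
  then have "(G * H) * R * (G * H) = (\<mu> * parity_phase R G * parity_phase R H) \<cdot>\<^sub>m R"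
    using parity_phase_mult[OF R(1) _ _ R(3)[OF in_K(1)] R(3)[OF in_K(2)] comm] by blast
  then have "parity_phase R (G * H) = \<mu> * parity_phase R G * parity_phase R H"
    by (rule parity_phase_eq[OF p0 R(1,2)])
  then show ?thesis
    using monomial_phase_in_quasi_centralizer[OF p K] in_K GH_in_K
    by (simp add: R_def power_mult_distrib)
qed

lemma monomial_phase_mult_diagonal:
  assumes p0: "p > 0" and G: "G \<in> monomial_group p" and H: "H \<in> monomial_group p"
    and diag: "G $$ (0, 0) \<noteq> 0" "H $$ (0, 0) \<noteq> 0" and comm: "G * H = \<mu> \<cdot>\<^sub>m (H * G)"
  shows "monomial_phase p (G * H) = \<mu> ^ ((p + 1) div 2) * monomial_phase p G * monomial_phase p H"
proof -
  obtain f b where g: "G = monomial_mat p 1 f b" "periodic_mod p f" "\<forall>t. f t \<noteq> 0"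
    using G by (rule monomial_groupE)
  obtain g c where h: "H = monomial_mat p 1 g c" "periodic_mod p g" "\<forall>t. g t \<noteq> 0"
    using H by (rule monomial_groupE)
  have G0: "G = monomial_mat p 1 f 0" and H0: "H = monomial_mat p 1 g 0"
    using diag g h p0 by (auto simp: monomial_mat_00 intro: monomial_mat_shift_cong split: if_splits)
  then have GH0: "G * H = monomial_mat p 1 (\<lambda>t. f t * g t) 0"
    and HG0: "H * G = monomial_mat p 1 (\<lambda>t. f t * g t) 0"
    using p0 g(2) h(2) by (simp_all add: monomial_mat_mult mult.commute)
  then have "1 \<cdot>\<^sub>m (H * G) = \<mu> \<cdot>\<^sub>m (H * G)" using comm by simp
  moreover have "(H * G) $$ (0, 0) \<noteq> 0" using HG0 g(3) h(3) p0 by (simp add: monomial_mat_00)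
  ultimately have "\<mu> = 1" using smult_mat_cancel[of "H * G" 0 0 1 \<mu>] p0 HG0 by simp
  moreover have "(G * H) $$ (0, 0) = f 0 * g 0" "G $$ (0, 0) = f 0" "H $$ (0, 0) = g 0"
    using GH0 G0 H0 p0 by (simp_all add: monomial_mat_00)
  ultimately show ?thesis
    using g(3) h(3) by (simp add: monomial_phase_def power_mult_distrib)
qed

text \<open>If \<open>G\<close> or \<open>H\<close> is not diagonal, then \<open>G\<close>, \<open>H\<close> and \<open>G H\<close> all lie in its quasi-centralizer.\<close>

lemma monomial_phase_mult:
  assumes p: "prime p" and G: "G \<in> monomial_group p" and H: "H \<in> monomial_group p"
    and comm: "G * H = \<mu> \<cdot>\<^sub>m (H * G)"
  shows "monomial_phase p (G * H) = \<mu> ^ ((p + 1) div 2) * monomial_phase p G * monomial_phase p H"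
proof -
  have p0: "p > 0" using p prime_gt_0_nat by blast
  have Gc: "G \<in> carrier_mat p p" and Hc: "H \<in> carrier_mat p p"
    using G H monomial_group_carrier by auto
  have GH: "G * H \<in> monomial_group p" by (rule monomial_group_mult[OF p0 G H])
  consider "G $$ (0, 0) = 0" | "H $$ (0, 0) = 0" | "G $$ (0, 0) \<noteq> 0" "H $$ (0, 0) \<noteq> 0"
    by blast
  then show ?thesis
  proof cases
    case 1
    have "\<mu> \<noteq> 0" by (rule monomial_group_commutator_nonzero[OF p0 G H comm])
    then have "H * G = (1 / \<mu>) \<cdot>\<^sub>m (G * H)" using comm by (simp add: smult_smult_mat)
    then have "(G * H) * G = (1 / \<mu>) \<cdot>\<^sub>m (G * (G * H))"
      using Gc Hc by (simp add: mult_smult_distrib[of _ p p _ p])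
    moreover have "quasi_commute H G"
      using quasi_commute_sym[OF p0 G H] comm by (auto simp: quasi_commute_def)
    ultimately show ?thesis
      using G H GH quasi_commute_refl
      by (intro monomial_phase_mult_in_quasi_centralizer[OF p G 1 _ _ comm])
        (auto simp: quasi_centralizer_def quasi_commute_def)
  next
    case 2
    have "(G * H) * H = \<mu> \<cdot>\<^sub>m (H * (G * H))"
      using comm Gc Hc by (simp add: mult_smult_assoc_mat[of _ p p _ p])
    then show ?thesis
      using G H GH comm quasi_commute_refl
      by (intro monomial_phase_mult_in_quasi_centralizer[OF p H 2 _ _ comm])
        (auto simp: quasi_centralizer_def quasi_commute_def)
  next
    case 3
    then show ?thesis by (rule monomial_phase_mult_diagonal[OF p0 G H _ _ comm])
  qed
qed

lemma monomial_phase_power: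
  assumes p: "prime p" and M: "M \<in> monomial_group p"
  shows "monomial_phase p (M ^\<^sub>m n) = monomial_phase p M ^ n"
proof -
  have p0: "p > 0" using p prime_gt_0_nat by blast
  have Mc: "M \<in> carrier_mat p p" using M by (rule monomial_group_carrier)
  show ?thesis
  proof (induction n)
    case 0
    then show ?case using Mc p0 by (simp add: monomial_phase_def)
  next
    case (Suc n)
    have "M ^\<^sub>m n * M = 1 \<cdot>\<^sub>m (M * M ^\<^sub>m n)" using commute_pow_mat[OF Mc Mc refl] by simp
    then have "monomial_phase p (M ^\<^sub>m n * M)
        = 1 ^ ((p + 1) div 2) * monomial_phase p (M ^\<^sub>m n) * monomial_phase p M"
      by (rule monomial_phase_mult[OF p monomial_group_power[OF p0 M] M])
    then show ?case using Suc by simp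
  qed
qed

lemma monomial_phase_scalar:
  "p > 0 \<Longrightarrow> z \<noteq> 0 \<Longrightarrow> monomial_phase p (z \<cdot>\<^sub>m 1\<^sub>m p) = (z ^ 2) ^ ((p + 1) div 2)"
  by (simp add: monomial_phase_def)

lemma monomial_phase_one: "p > 0 \<Longrightarrow> monomial_phase p (1\<^sub>m p) = 1"
  by (simp add: monomial_phase_def)

section \<open>Kronecker products\<close>

lemma mult_add_less_mult:
  fixes i j m n :: nat
  assumes "i < m" "j < n"
  shows "i * n + j < m * n"
proof -
  have "i * n + j < Suc i * n" using assms(2) by simp
  also have "\<dots> \<le> m * n" using assms(1) by (intro mult_right_mono) auto
  finally show ?thesis .
qed

lemma sum_lessThan_mult_split:
  fixes g :: "nat \<Rightarrow> 'a :: comm_monoid_add"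
  shows "(\<Sum>k<n * m. g k) = (\<Sum>k1<n. \<Sum>k2<m. g (k1 * m + k2))"
proof -
  have "sum g {k1 * m..<k1 * m + m} = (\<Sum>k2<m. g (k1 * m + k2))" for k1
    using sum.shift_bounds_nat_ivl[of g 0 "k1 * m" m] by (simp add: add.commute lessThan_atLeast0)
  then show ?thesis using sum.nat_group[where g = g and k = m and n = n] by simp
qed

lemma kron_carrier: "kron A B \<in> carrier_mat (dim_row A * dim_row B) (dim_col A * dim_col B)"
  by (simp add: kron_def)

lemma kron_index:
  assumes "i < dim_row A * dim_row B" "j < dim_col A * dim_col B"
  shows "kron A B $$ (i, j)
       = A $$ (i div dim_row B, j div dim_col B) * B $$ (i mod dim_row B, j mod dim_col B)"
  using assms by (simp add: kron_def)

lemma kron_index_block: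
  assumes "i < dim_row A" "j < dim_col A" "u < dim_row B" "v < dim_col B"
  shows "kron A B $$ (i * dim_row B + u, j * dim_col B + v) = A $$ (i, j) * B $$ (u, v)"
  using assms by (simp add: kron_index mult_add_less_mult)

lemma kron_mult:
  fixes A B C D :: "complex mat"
  assumes A: "A \<in> carrier_mat n n" and C: "C \<in> carrier_mat n n"
    and B: "B \<in> carrier_mat m m" and D: "D \<in> carrier_mat m m"
  shows "kron A B * kron C D = kron (A * C) (B * D)"
proof (rule eq_matI)
  fix i j assume "i < dim_row (kron (A * C) (B * D))" "j < dim_col (kron (A * C) (B * D))"
  then have ij: "i < n * m" "j < n * m" using A B C D by (simp_all add: kron_def)
  then have "m > 0" by (cases m) auto
  have "(kron A B * kron C D) $$ (i, j) = (\<Sum>k<n * m. kron A B $$ (i, k) * kron C D $$ (k, j))"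
    using ij A B C D by (simp add: kron_def scalar_prod_def lessThan_atLeast0)
  also have "\<dots> = (\<Sum>k1<n. \<Sum>k2<m. kron A B $$ (i, k1 * m + k2) * kron C D $$ (k1 * m + k2, j))"
    by (rule sum_lessThan_mult_split)
  also have "\<dots> = (\<Sum>k1<n. \<Sum>k2<m. (A $$ (i div m, k1) * C $$ (k1, j div m))
                                   * (B $$ (i mod m, k2) * D $$ (k2, j mod m)))"
    using A B C D ij \<open>m > 0\<close> by (intro sum.cong refl) (simp add: kron_index mult_add_less_mult)
  also have "\<dots> = (\<Sum>k1<n. A $$ (i div m, k1) * C $$ (k1, j div m))
                 * (\<Sum>k2<m. B $$ (i mod m, k2) * D $$ (k2, j mod m))"
    by (simp add: sum_product)
  also have "\<dots> = kron (A * C) (B * D) $$ (i, j)"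
    using A B C D ij \<open>m > 0\<close>
    by (simp add: kron_index less_mult_imp_div_less scalar_prod_def lessThan_atLeast0)
  finally show "(kron A B * kron C D) $$ (i, j) = kron (A * C) (B * D) $$ (i, j)" .
qed (use A B C D in \<open>simp_all add: kron_def\<close>)

lemma kron_one: "kron (1\<^sub>m a) (1\<^sub>m b) = (1\<^sub>m (a * b) :: complex mat)"
proof (rule eq_matI)
  fix i j assume "i < dim_row (1\<^sub>m (a * b) :: complex mat)" "j < dim_col (1\<^sub>m (a * b) :: complex mat)"
  then have ij: "i < a * b" "j < a * b" by auto
  then have "b > 0" by (cases b) auto
  have "(i div b = j div b \<and> i mod b = j mod b) \<longleftrightarrow> i = j" by (metis div_mult_mod_eq)
  then show "kron (1\<^sub>m a) (1\<^sub>m b) $$ (i, j) = (1\<^sub>m (a * b) :: complex mat) $$ (i, j)"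
    using ij \<open>b > 0\<close> by (auto simp: kron_index less_mult_imp_div_less)
qed (auto simp: kron_def)

lemma kron_smult_left: "kron (a \<cdot>\<^sub>m A) B = a \<cdot>\<^sub>m kron A (B :: complex mat)"
proof (rule eq_matI)
  fix i j assume "i < dim_row (a \<cdot>\<^sub>m kron A B)" "j < dim_col (a \<cdot>\<^sub>m kron A B)"
  then have "i < dim_row A * dim_row B" "j < dim_col A * dim_col B" by (auto simp: kron_def)
  then show "kron (a \<cdot>\<^sub>m A) B $$ (i, j) = (a \<cdot>\<^sub>m kron A B) $$ (i, j)"
    by (simp add: kron_index kron_def less_mult_imp_div_less)
qed (auto simp: kron_def)

lemma kron_list_carrier:
  "\<forall>M\<in>set Ms. M \<in> carrier_mat p p \<Longrightarrow> kron_list Ms \<in> carrier_mat (p ^ length Ms) (p ^ length Ms)"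
  by (induction Ms) (auto intro: kron_carrier[THEN carrier_matD(1)] simp: kron_def)

lemma kron_list_mult:
  assumes "length As = length Bs" "\<forall>M\<in>set As \<union> set Bs. M \<in> carrier_mat p p"
  shows "kron_list As * kron_list Bs = kron_list (map2 (*) As Bs)"
  using assms
proof (induction As Bs rule: list_induct2)
  case (Cons A As B Bs)
  have "kron_list As \<in> carrier_mat (p ^ length As) (p ^ length As)"
    "kron_list Bs \<in> carrier_mat (p ^ length As) (p ^ length As)"
    using kron_list_carrier[of As p] kron_list_carrier[of Bs p] Cons by auto
  then show ?case using Cons kron_mult[of A p B] by simp
qed simp

lemma kron_list_one: "kron_list (replicate n (1\<^sub>m p)) = 1\<^sub>m (p ^ n)"
  by (induction n) (simp_all add: kron_one)

lemma kron_list_pow: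
  assumes "\<forall>M\<in>set Ms. M \<in> carrier_mat p p"
  shows "kron_list Ms ^\<^sub>m k = kron_list (map (\<lambda>M. M ^\<^sub>m k) Ms)"
proof (induction k)
  case 0
  have "map (\<lambda>M. M ^\<^sub>m 0) Ms = replicate (length Ms) (1\<^sub>m p)"
    using assms by (intro nth_equalityI) auto
  then show ?case using kron_list_carrier[OF assms] by (simp add: kron_list_one)
next
  case (Suc k)
  have "kron_list Ms ^\<^sub>m Suc k = kron_list (map (\<lambda>M. M ^\<^sub>m k) Ms) * kron_list Ms"
    using Suc by simp
  also have "\<dots> = kron_list (map2 (*) (map (\<lambda>M. M ^\<^sub>m k) Ms) Ms)"
    using assms by (intro kron_list_mult[of _ _ p]) auto
  finally show ?case by (simp add: zip_map1 zip_same_conv_map comp_def)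
qed

lemma kron_list_nonzero_entry:
  assumes "\<forall>M\<in>set Ms. M \<in> carrier_mat p p \<and> (\<exists>i j. i < p \<and> j < p \<and> M $$ (i, j) \<noteq> 0)"
  shows "\<exists>i j. i < p ^ length Ms \<and> j < p ^ length Ms \<and> kron_list Ms $$ (i, j) \<noteq> 0"
  using assms
proof (induction Ms)
  case Nil
  show ?case by (intro exI[of _ 0]) simp
next
  case (Cons M Ms)
  define P where "P = p ^ length Ms"
  obtain u v where uv: "u < P" "v < P" "kron_list Ms $$ (u, v) \<noteq> 0"
    using Cons by (auto simp: P_def)
  obtain i j where ij: "i < p" "j < p" "M $$ (i, j) \<noteq> 0" using Cons.prems by auto
  have "M \<in> carrier_mat p p" "kron_list Ms \<in> carrier_mat P P"
    using kron_list_carrier[of Ms p] Cons.prems by (auto simp: P_def)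
  then show ?case
    using kron_index_block[of i M j u "kron_list Ms" v] ij uv mult_add_less_mult
    by (intro exI[of _ "i * P + u"] exI[of _ "j * P + v"]) (simp add: P_def)
qed

lemma kron_eq_smult_kron:
  assumes A: "A \<in> carrier_mat p p" and B: "B \<in> carrier_mat p p"
    and X: "X \<in> carrier_mat P P" and Y: "Y \<in> carrier_mat P P"
    and eq: "kron A X = c \<cdot>\<^sub>m kron B Y" and c: "c \<noteq> 0"
    and B_nz: "i0 < p" "j0 < p" "B $$ (i0, j0) \<noteq> 0"
    and Y_nz: "u0 < P" "v0 < P" "Y $$ (u0, v0) \<noteq> 0"
  obtains \<mu> where "\<mu> \<noteq> 0" "A = \<mu> \<cdot>\<^sub>m B" "X = (c / \<mu>) \<cdot>\<^sub>m Y"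
proof -
  have E: "A $$ (i, j) * X $$ (u, v) = c * (B $$ (i, j) * Y $$ (u, v))"
    if "i < p" "j < p" "u < P" "v < P" for i j u v
  proof -
    have "kron A X $$ (i * P + u, j * P + v) = (c \<cdot>\<^sub>m kron B Y) $$ (i * P + u, j * P + v)"
      using eq by simp
    then show ?thesis
      using that A B X Y kron_index_block[of i A j u X v] kron_index_block[of i B j u Y v]
        mult_add_less_mult[of i p u P] mult_add_less_mult[of j p v P]
      by (simp add: kron_def)
  qed
  have "X $$ (u0, v0) \<noteq> 0" and "A $$ (i0, j0) \<noteq> 0"
    using E[OF B_nz(1,2) Y_nz(1,2)] c B_nz(3) Y_nz(3) by auto
  define \<mu> where "\<mu> = c * Y $$ (u0, v0) / X $$ (u0, v0)"
  have A_eq: "A = \<mu> \<cdot>\<^sub>m B"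
  proof (rule eq_matI)
    fix i j assume "i < dim_row (\<mu> \<cdot>\<^sub>m B)" "j < dim_col (\<mu> \<cdot>\<^sub>m B)"
    then have "i < p" "j < p" using B by auto
    then show "A $$ (i, j) = (\<mu> \<cdot>\<^sub>m B) $$ (i, j)"
      using E[of i j u0 v0] Y_nz(1,2) \<open>X $$ (u0, v0) \<noteq> 0\<close> B by (simp add: \<mu>_def field_simps)
  qed (use A B in auto)
  have "\<mu> \<noteq> 0" using A_eq B_nz \<open>A $$ (i0, j0) \<noteq> 0\<close> B by auto
  have "X = (c / \<mu>) \<cdot>\<^sub>m Y"
  proof (rule eq_matI)
    fix u v assume "u < dim_row ((c / \<mu>) \<cdot>\<^sub>m Y)" "v < dim_col ((c / \<mu>) \<cdot>\<^sub>m Y)"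
    then have "u < P" "v < P" using Y by auto
    moreover have "A $$ (i0, j0) = \<mu> * B $$ (i0, j0)" using A_eq B_nz B by simp
    ultimately show "X $$ (u, v) = ((c / \<mu>) \<cdot>\<^sub>m Y) $$ (u, v)"
      using E[of i0 j0 u v] B_nz \<open>\<mu> \<noteq> 0\<close> Y by (simp add: field_simps)
  qed (use X Y in auto)
  then show ?thesis using that \<open>\<mu> \<noteq> 0\<close> A_eq by blast
qed

lemma kron_list_eq_smult_factorwise:
  assumes len: "length As = length Bs"
    and A: "\<forall>M\<in>set As. M \<in> carrier_mat p p"
    and B: "\<forall>M\<in>set Bs. M \<in> carrier_mat p p \<and> (\<exists>i j. i < p \<and> j < p \<and> M $$ (i, j) \<noteq> 0)"
    and eq: "kron_list As = c \<cdot>\<^sub>m kron_list Bs" and c: "c \<noteq> 0"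
  obtains \<mu> where "\<forall>k<length As. As ! k = \<mu> k \<cdot>\<^sub>m Bs ! k" "(\<Prod>k<length As. \<mu> k) = c"
proof -
  have "\<exists>\<mu>. (\<forall>k<length As. As ! k = \<mu> k \<cdot>\<^sub>m Bs ! k) \<and> (\<Prod>k<length As. \<mu> k) = c"
    using len A B eq c
  proof (induction As Bs arbitrary: c rule: list_induct2)
    case Nil
    then have "(1\<^sub>m 1 :: complex mat) $$ (0, 0) = (c \<cdot>\<^sub>m 1\<^sub>m 1) $$ (0, 0)" by simp
    then show ?case by simp
  next
    case (Cons A As B Bs)
    define P where "P = p ^ length As"
    have X: "kron_list As \<in> carrier_mat P P" and Y: "kron_list Bs \<in> carrier_mat P P"
      using kron_list_carrier[of As p] kron_list_carrier[of Bs p] Cons by (auto simp: P_def)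
    obtain u v where uv: "u < P" "v < P" "kron_list Bs $$ (u, v) \<noteq> 0"
      using kron_list_nonzero_entry[of Bs p] Cons by (auto simp: P_def)
    obtain i j where ij: "i < p" "j < p" "B $$ (i, j) \<noteq> 0" using Cons.prems by auto
    have "A \<in> carrier_mat p p" "B \<in> carrier_mat p p" "kron A (kron_list As) = c \<cdot>\<^sub>m kron B (kron_list Bs)"
      using Cons.prems by auto
    then obtain \<mu>0 where \<mu>0: "\<mu>0 \<noteq> 0" "A = \<mu>0 \<cdot>\<^sub>m B"
      "kron_list As = (c / \<mu>0) \<cdot>\<^sub>m kron_list Bs"
      using kron_eq_smult_kron[OF _ _ X Y _ Cons.prems(4) ij uv] by blast
    then obtain \<mu>' where \<mu>': "\<forall>k<length As. As ! k = \<mu>' k \<cdot>\<^sub>m Bs ! k"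
      "(\<Prod>k<length As. \<mu>' k) = c / \<mu>0"
      using Cons.IH[of "c / \<mu>0"] Cons.prems by auto
    define \<mu> where "\<mu> k = (if k = 0 then \<mu>0 else \<mu>' (k - 1))" for k
    have "\<forall>k<length (A # As). (A # As) ! k = \<mu> k \<cdot>\<^sub>m (B # Bs) ! k"
      using \<mu>0(2) \<mu>'(1) by (auto simp: \<mu>_def nth_Cons split: nat.split)
    moreover have "(\<Prod>k<length (A # As). \<mu> k) = c"
      using \<mu>'(2) \<mu>0(1) by (simp add: prod.lessThan_Suc_shift \<mu>_def del: prod.lessThan_Suc)
    ultimately show ?case by blast
  qed
  then show ?thesis using that by blast
qed

section \<open>The phase of a tensor product\<close>

definition tensor_phase :: "nat \<Rightarrow> complex mat list \<Rightarrow> complex" where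
  "tensor_phase p Ms = (\<Prod>M\<leftarrow>Ms. monomial_phase p M)"

lemma tensor_phase_conv_nth: "tensor_phase p Ms = (\<Prod>k<length Ms. monomial_phase p (Ms ! k))"
  by (simp add: tensor_phase_def prod.list_conv_set_nth lessThan_atLeast0)

lemma tensor_phase_pow:
  assumes p: "prime p" and Ms: "set Ms \<subseteq> monomial_group p"
  shows "tensor_phase p (map (\<lambda>M. M ^\<^sub>m k) Ms) = tensor_phase p Ms ^ k"
  using Ms by (induction Ms) (simp_all add: tensor_phase_def monomial_phase_power[OF p] power_mult_distrib)

lemma tensor_phase_scalar:
  assumes p: "prime p" and Ms: "set Ms \<subseteq> monomial_group p"
    and eq: "kron_list Ms = z \<cdot>\<^sub>m 1\<^sub>m (p ^ length Ms)" and z: "z \<noteq> 0"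
  shows "tensor_phase p Ms = (z ^ 2) ^ ((p + 1) div 2)"
proof -
  have p0: "p > 0" using p prime_gt_0_nat by blast
  have eq': "kron_list Ms = z \<cdot>\<^sub>m kron_list (replicate (length Ms) (1\<^sub>m p))"
    using eq by (simp add: kron_list_one)
  obtain \<nu> where \<nu>: "\<forall>k<length Ms. Ms ! k = \<nu> k \<cdot>\<^sub>m replicate (length Ms) (1\<^sub>m p) ! k"
    "(\<Prod>k<length Ms. \<nu> k) = z"
    by (rule kron_list_eq_smult_factorwise[OF _ _ _ eq'])
      (use Ms monomial_group_carrier one_mat_nonzero_entry[OF p0] z in auto)
  have "\<nu> k \<noteq> 0" if "k < length Ms" for k using \<nu>(2) z that by auto
  then have "tensor_phase p Ms = (\<Prod>k<length Ms. (\<nu> k ^ 2) ^ ((p + 1) div 2))"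
    using \<nu>(1) p0 by (simp add: tensor_phase_conv_nth monomial_phase_scalar)
  also have "\<dots> = (z ^ 2) ^ ((p + 1) div 2)"
    by (simp add: \<nu>(2)[symmetric] prod_power_distrib)
  finally show ?thesis .
qed

lemma kron_list_monomial_carrier:
  "set Ms \<subseteq> monomial_group p \<Longrightarrow> kron_list Ms \<in> carrier_mat (p ^ length Ms) (p ^ length Ms)"
  using kron_list_carrier[of Ms p] monomial_group_carrier by blast

lemma map2_mult_in_monomial_group:
  assumes "p > 0" "set As \<subseteq> monomial_group p" "set Bs \<subseteq> monomial_group p"
  shows "set (map2 (*) As Bs) \<subseteq> monomial_group p"
  using assms monomial_group_mult[OF assms(1)] by (auto elim!: in_set_zipE)

text \<open>The commutation scalars \<open>\<mu>\<^sub>k\<close> of the individual tensor factors multiply to \<open>1\<close>, so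
  their contributions \<open>\<mu>\<^sub>k ^ ((p + 1) div 2)\<close> cancel.\<close>

lemma tensor_phase_mult_commuting:
  assumes p: "prime p" and len: "length As = length Bs"
    and As: "set As \<subseteq> monomial_group p" and Bs: "set Bs \<subseteq> monomial_group p"
    and comm: "kron_list As * kron_list Bs = kron_list Bs * kron_list As"
  shows "tensor_phase p (map2 (*) As Bs) = tensor_phase p As * tensor_phase p Bs"
proof -
  have p0: "p > 0" using p prime_gt_0_nat by blast
  have carrier: "\<forall>M\<in>set As \<union> set Bs. M \<in> carrier_mat p p"
    using As Bs monomial_group_carrier by blast
  have eq: "kron_list (map2 (*) As Bs) = 1 \<cdot>\<^sub>m kron_list (map2 (*) Bs As)"
    using comm kron_list_mult[OF len carrier] kron_list_mult[OF len[symmetric]] carrier by auto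
  have "set (map2 (*) Bs As) \<subseteq> monomial_group p" "set (map2 (*) As Bs) \<subseteq> monomial_group p"
    using map2_mult_in_monomial_group[OF p0] As Bs by auto
  then have AB: "\<forall>M\<in>set (map2 (*) As Bs). M \<in> carrier_mat p p"
    and BA: "\<forall>M\<in>set (map2 (*) Bs As). M \<in> carrier_mat p p \<and> (\<exists>i j. i < p \<and> j < p \<and> M $$ (i, j) \<noteq> 0)"
    using monomial_group_carrier monomial_group_nonzero_entry[OF p0] by blast+
  obtain \<mu> where \<mu>:
    "\<forall>k<length (map2 (*) As Bs). map2 (*) As Bs ! k = \<mu> k \<cdot>\<^sub>m map2 (*) Bs As ! k"
    "(\<Prod>k<length (map2 (*) As Bs). \<mu> k) = 1"
    by (rule kron_list_eq_smult_factorwise[OF _ AB BA eq]) (use len in auto)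
  have "monomial_phase p (As ! k * Bs ! k)
      = \<mu> k ^ ((p + 1) div 2) * monomial_phase p (As ! k) * monomial_phase p (Bs ! k)"
    if "k < length As" for k
    using that len \<mu>(1) As Bs by (intro monomial_phase_mult[OF p]) auto
  then have "tensor_phase p (map2 (*) As Bs)
      = (\<Prod>k<length As. \<mu> k ^ ((p + 1) div 2) * monomial_phase p (As ! k) * monomial_phase p (Bs ! k))"
    using len by (simp add: tensor_phase_conv_nth)
  also have "\<dots> = (\<Prod>k<length As. \<mu> k) ^ ((p + 1) div 2)
      * (\<Prod>k<length As. monomial_phase p (As ! k)) * (\<Prod>k<length As. monomial_phase p (Bs ! k))"
    by (simp add: prod.distrib prod_power_distrib)
  also have "\<dots> = tensor_phase p As * tensor_phase p Bs"
    using len \<mu>(2) by (simp add: tensor_phase_conv_nth)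
  finally show ?thesis .
qed

lemma commuting_kron_list_product:
  assumes p: "prime p"
    and Ls: "\<forall>Ms\<in>set Ls. length Ms = N \<and> set Ms \<subseteq> monomial_group p"
    and comm: "\<forall>Ms\<in>set Ls. \<forall>Ms'\<in>set Ls. kron_list Ms * kron_list Ms' = kron_list Ms' * kron_list Ms"
  obtains Fs where "length Fs = N" "set Fs \<subseteq> monomial_group p"
    "foldr (\<lambda>M acc. M * acc) (map kron_list Ls) (1\<^sub>m (p ^ N)) = kron_list Fs"
    "tensor_phase p Fs = (\<Prod>Ms\<leftarrow>Ls. tensor_phase p Ms)"
proof -
  have p0: "p > 0" using p prime_gt_0_nat by blast
  have "\<exists>Fs. length Fs = N \<and> set Fs \<subseteq> monomial_group p
      \<and> foldr (\<lambda>M acc. M * acc) (map kron_list Ls) (1\<^sub>m (p ^ N)) = kron_list Fs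
      \<and> tensor_phase p Fs = (\<Prod>Ms\<leftarrow>Ls. tensor_phase p Ms)"
    using Ls comm
  proof (induction Ls)
    case Nil
    show ?case
      using one_mat_in_monomial_group monomial_phase_one[OF p0]
      by (intro exI[of _ "replicate N (1\<^sub>m p)"])
        (simp add: kron_list_one tensor_phase_def set_replicate_conv_if)
  next
    case (Cons Ms Ls)
    have Ms: "length Ms = N" "set Ms \<subseteq> monomial_group p" using Cons.prems(1) by auto
    have "\<forall>A\<in>set Ls. \<forall>B\<in>set Ls. kron_list A * kron_list B = kron_list B * kron_list A"
      by (intro ballI, rule Cons.prems(2)[rule_format]) simp_all
    then obtain Fs where Fs: "length Fs = N" "set Fs \<subseteq> monomial_group p"
      "foldr (\<lambda>M acc. M * acc) (map kron_list Ls) (1\<^sub>m (p ^ N)) = kron_list Fs"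
      "tensor_phase p Fs = (\<Prod>Ms\<leftarrow>Ls. tensor_phase p Ms)"
      using Cons.IH Cons.prems(1) by auto
    have comm_Ls: "A \<in> carrier_mat (p ^ N) (p ^ N) \<and> kron_list Ms * A = A * kron_list Ms"
      if A: "A \<in> set (map kron_list Ls)" for A
    proof -
      obtain Ms' where Ms': "A = kron_list Ms'" "Ms' \<in> set Ls"
        using A unfolding set_map by (rule imageE)
      have "length Ms' = N" "set Ms' \<subseteq> monomial_group p" using Ms'(2) Cons.prems(1) by auto
      moreover have "kron_list Ms * kron_list Ms' = kron_list Ms' * kron_list Ms"
        by (rule Cons.prems(2)[rule_format]) (simp_all add: Ms'(2))
      ultimately show ?thesis unfolding Ms'(1) using kron_list_monomial_carrier by fastforce
    qed
    have "kron_list Ms * foldr (\<lambda>M acc. M * acc) (map kron_list Ls) (1\<^sub>m (p ^ N))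
        = foldr (\<lambda>M acc. M * acc) (map kron_list Ls) (1\<^sub>m (p ^ N)) * kron_list Ms"
      using kron_list_monomial_carrier[OF Ms(2)] Ms(1)
      by (intro commute_foldr_mult_mat) (use comm_Ls in auto)
    then have "kron_list Ms * kron_list Fs = kron_list Fs * kron_list Ms"
      unfolding Fs(3) .
    then have "tensor_phase p (map2 (*) Ms Fs) = tensor_phase p Ms * tensor_phase p Fs"
      using Ms Fs by (intro tensor_phase_mult_commuting[OF p]) auto
    moreover have "kron_list Ms * kron_list Fs = kron_list (map2 (*) Ms Fs)"
      using Ms Fs monomial_group_carrier by (intro kron_list_mult) auto
    ultimately show ?case
      using Ms Fs map2_mult_in_monomial_group[OF p0 Ms(2) Fs(2)]
      by (intro exI[of _ "map2 (*) Ms Fs"]) simp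
  qed
  then show ?thesis by (elim exE conjE) (rule that; assumption)
qed

lemma quantum_row_phase:
  assumes p: "prime p"
    and Ms: "\<forall>j<s. length (Ms j) = N \<and> set (Ms j) \<subseteq> monomial_group p"
    and comm: "\<forall>j<s. \<forall>k<s. kron_list (Ms j) ^\<^sub>m e j * kron_list (Ms k) ^\<^sub>m e k
                          = kron_list (Ms k) ^\<^sub>m e k * kron_list (Ms j) ^\<^sub>m e j"
    and row: "ord_prod (p ^ N) s (\<lambda>j. kron_list (Ms j) ^\<^sub>m e j) = z \<cdot>\<^sub>m 1\<^sub>m (p ^ N)"
    and z: "z \<noteq> 0"
  shows "(\<Prod>j<s. tensor_phase p (Ms j) ^ e j) = (z ^ 2) ^ ((p + 1) div 2)"
proof -
  have p0: "p > 0" using p prime_gt_0_nat by blast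
  define L where "L j = map (\<lambda>M. M ^\<^sub>m e j) (Ms j)" for j
  have kron_L: "kron_list (L j) = kron_list (Ms j) ^\<^sub>m e j" if "j < s" for j
  proof -
    have "\<forall>M\<in>set (Ms j). M \<in> carrier_mat p p" using Ms that monomial_group_carrier by blast
    from kron_list_pow[OF this] show ?thesis by (simp add: L_def)
  qed
  have L: "\<forall>Ms\<in>set (map L [0..<s]). length Ms = N \<and> set Ms \<subseteq> monomial_group p"
    using Ms monomial_group_power[OF p0] by (fastforce simp: L_def)
  have "\<forall>A\<in>set (map L [0..<s]). \<forall>B\<in>set (map L [0..<s]).
      kron_list A * kron_list B = kron_list B * kron_list A"
    using comm kron_L by auto
  then obtain Fs where Fs: "length Fs = N" "set Fs \<subseteq> monomial_group p"
    "foldr (\<lambda>M acc. M * acc) (map kron_list (map L [0..<s])) (1\<^sub>m (p ^ N)) = kron_list Fs"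
    "tensor_phase p Fs = (\<Prod>Ms\<leftarrow>map L [0..<s]. tensor_phase p Ms)"
    by (rule commuting_kron_list_product[OF p L])
  have map_eq: "map (\<lambda>j. kron_list (L j)) [0..<s] = map (\<lambda>j. kron_list (Ms j) ^\<^sub>m e j) [0..<s]"
    using kron_L by simp
  have "kron_list Fs = foldr (\<lambda>M acc. M * acc) (map (\<lambda>j. kron_list (L j)) [0..<s]) (1\<^sub>m (p ^ N))"
    using Fs(3) by (simp add: comp_def)
  also have "\<dots> = ord_prod (p ^ N) s (\<lambda>j. kron_list (Ms j) ^\<^sub>m e j)"
    unfolding ord_prod_def map_eq ..
  finally have "kron_list Fs = z \<cdot>\<^sub>m 1\<^sub>m (p ^ length Fs)"
    using Fs(1) row by simp
  then have "tensor_phase p Fs = (z ^ 2) ^ ((p + 1) div 2)"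
    by (rule tensor_phase_scalar[OF p Fs(2) _ z])
  moreover have "(\<Prod>Ms\<leftarrow>map L [0..<s]. tensor_phase p Ms) = (\<Prod>j\<in>set [0..<s]. tensor_phase p (L j))"
    by (subst prod.distinct_set_conv_list) (simp_all add: comp_def)
  then have "tensor_phase p Fs = (\<Prod>j<s. tensor_phase p (L j))"
    using Fs(4) by (simp add: lessThan_atLeast0)
  moreover have "tensor_phase p (L j) = tensor_phase p (Ms j) ^ e j" if "j < s" for j
    using Ms that by (simp add: L_def tensor_phase_pow[OF p])
  ultimately show ?thesis by simp
qed

lemma tensor_phase_root_of_unity:
  assumes p: "prime p" and Ms: "set Ms \<subseteq> monomial_group p"
    and root: "kron_list Ms ^\<^sub>m p = 1\<^sub>m (p ^ length Ms)"
  shows "tensor_phase p Ms ^ p = 1"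
proof -
  have "\<forall>M\<in>set Ms. M \<in> carrier_mat p p" using Ms monomial_group_carrier by blast
  then have eq: "kron_list (map (\<lambda>M. M ^\<^sub>m p) Ms) = 1 \<cdot>\<^sub>m 1\<^sub>m (p ^ length (map (\<lambda>M. M ^\<^sub>m p) Ms))"
    using root kron_list_pow by simp
  have "set (map (\<lambda>M. M ^\<^sub>m p) Ms) \<subseteq> monomial_group p"
    using Ms monomial_group_power[of p] p prime_gt_0_nat by auto
  from tensor_phase_scalar[OF p this eq] have "tensor_phase p (map (\<lambda>M. M ^\<^sub>m p) Ms) = 1"
    by simp
  then show ?thesis using tensor_phase_pow[OF p Ms] by simp
qed

lemma omega_pow: "p > 0 \<Longrightarrow> omega p ^ k = cis (2 * pi * real k / real p)"
  by (simp add: omega_def DeMoivre field_simps)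

lemma omega_power_p: "p > 0 \<Longrightarrow> omega p ^ p = 1"
  by (simp add: omega_pow)

lemma omega_pow_mod:
  assumes "p > 0"
  shows "omega p ^ (k mod p) = omega p ^ k"
proof -
  have "omega p ^ k = omega p ^ (p * (k div p) + k mod p)" by simp
  also have "\<dots> = (omega p ^ p) ^ (k div p) * omega p ^ (k mod p)"
    by (simp only: power_add power_mult)
  finally show ?thesis using omega_power_p[OF assms] by simp
qed

lemma omega_pow_power:
  assumes "p > 0"
  shows "(omega p ^ k) ^ p = 1"
proof -
  have "(omega p ^ k) ^ p = (omega p ^ p) ^ k" by (simp only: power_mult[symmetric] mult.commute)
  then show ?thesis using omega_power_p[OF assms] by simp
qed

lemma omega_pow_eq_iff:
  assumes p: "p > 0"
  shows "omega p ^ m = omega p ^ n \<longleftrightarrow> m mod p = n mod p"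
proof
  assume "omega p ^ m = omega p ^ n"
  then have "omega p ^ (m mod p) = omega p ^ (n mod p)" by (simp only: omega_pow_mod[OF p])
  then have "cis (2 * pi * real (m mod p) / real p) = cis (2 * pi * real (n mod p) / real p)"
    by (simp only: omega_pow[OF p])
  then show "m mod p = n mod p"
    using bij_betw_roots_unity[OF p] p by (auto simp: bij_betw_def inj_on_def)
next
  assume "m mod p = n mod p"
  then have "omega p ^ (m mod p) = omega p ^ (n mod p)" by simp
  then show "omega p ^ m = omega p ^ n" by (simp only: omega_pow_mod[OF p])
qed

lemma root_of_unity_eq_omega_pow:
  assumes p: "p > 0" and z: "z ^ p = 1"
  obtains k where "z = omega p ^ k"
proof -
  have "z \<in> (\<lambda>k. cis (2 * pi * real k / real p)) ` {..<p}"
    using bij_betw_roots_unity[OF p] z by (simp add: bij_betw_def)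
  then show ?thesis using omega_pow[OF p] that by auto
qed

lemma omega_pow_square_half:
  assumes "odd p"
  shows "((omega p ^ k) ^ 2) ^ ((p + 1) div 2) = omega p ^ k"
proof -
  have p0: "p > 0" using assms by (simp add: odd_pos)
  have "((omega p ^ k) ^ 2) ^ ((p + 1) div 2) = (omega p ^ k) ^ (2 * ((p + 1) div 2))"
    by (rule power_mult[symmetric])
  also have "\<dots> = (omega p ^ k) ^ p * omega p ^ k"
    using assms by (auto elim: oddE simp: power_add)
  also have "\<dots> = omega p ^ k"
    using omega_pow_power[OF p0, of k] by simp
  finally show ?thesis .
qed

lemma omega_pow_smult_one_in_KQN:
  assumes p: "p > 0" and TQ: "Tpow p p \<subseteq> Q" and N: "N \<ge> 1"
  shows "(omega p ^ k) \<cdot>\<^sub>m 1\<^sub>m (p ^ N) \<in> KQN p Q N"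
proof -
  define z where "z = omega p ^ k"
  have S: "z \<cdot>\<^sub>m 1\<^sub>m p = Smat p (\<lambda>_. z)" by (rule eq_matI) (auto simp: Smat_def)
  have "z ^ p = 1" using omega_pow_power[OF p] by (simp add: z_def)
  moreover have "norm z = 1" by (simp add: z_def omega_def norm_power)
  ultimately have "Smat p (\<lambda>_. z) \<in> Tpow p p"
    using S smult_one_mat_pow[of z p p] unfolding Tpow_def Tgrp_def by auto
  then have "z \<cdot>\<^sub>m 1\<^sub>m p \<in> Q" using TQ S by auto
  then have "z \<cdot>\<^sub>m 1\<^sub>m p * Xmat p ^\<^sub>m 0 \<in> KQ p Q" using p by (intro KQ.gen) auto
  then have "z \<cdot>\<^sub>m 1\<^sub>m p \<in> KQ p Q" by (simp add: Xmat_def)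
  moreover have "kron_list (z \<cdot>\<^sub>m 1\<^sub>m p # replicate (N - 1) (1\<^sub>m p)) = z \<cdot>\<^sub>m 1\<^sub>m (p ^ N)"
    using N by (cases N) (simp_all add: kron_smult_left kron_list_one kron_one)
  ultimately show ?thesis
    unfolding KQN_def z_def[symmetric] using N KQ.one
    by (intro CollectI exI[of _ "z \<cdot>\<^sub>m 1\<^sub>m p # replicate (N - 1) (1\<^sub>m p)"]) auto
qed

lemma KQN_kron_factors:
  assumes p: "p > 1" and Q: "Q \<subseteq> Tgrp p" and g: "\<forall>j<s. g j \<in> KQN p Q N"
  obtains Ms where
    "\<forall>j<s. g j = kron_list (Ms j) \<and> length (Ms j) = N \<and> set (Ms j) \<subseteq> monomial_group p"
proof -
  have "\<forall>j\<in>{..<s}. \<exists>Ms. g j = kron_list Ms \<and> length Ms = N \<and> set Ms \<subseteq> monomial_group p"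
    using g KQ_subset_monomial_group[OF p Q] unfolding KQN_def by blast
  then obtain Ms where
    "\<forall>j\<in>{..<s}. g j = kron_list (Ms j) \<and> length (Ms j) = N \<and> set (Ms j) \<subseteq> monomial_group p"
    by (rule bchoice[THEN exE])
  then have "\<forall>j<s. g j = kron_list (Ms j) \<and> length (Ms j) = N \<and> set (Ms j) \<subseteq> monomial_group p"
    by simp
  then show ?thesis by (rule that)
qed

lemma quantum_solution_row_powers_commute:
  assumes qs: "quantum_solution p r s A c n G g" and g: "\<forall>j<s. g j \<in> carrier_mat n n"
    and i: "i < r" and jk: "j < s" "k < s"
  shows "g j ^\<^sub>m nat (A i j mod int p) * g k ^\<^sub>m nat (A i k mod int p)
       = g k ^\<^sub>m nat (A i k mod int p) * g j ^\<^sub>m nat (A i j mod int p)"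
proof (cases "A i j mod int p = 0 \<or> A i k mod int p = 0")
  case True
  have "g j \<in> carrier_mat n n" "g k \<in> carrier_mat n n" using g jk by auto
  then show ?thesis
    using True pow_carrier_mat[of "g j" n] pow_carrier_mat[of "g k" n] by (auto simp: carrier_matD)
next
  case False
  then have "g j * g k = g k * g j" using qs i jk unfolding quantum_solution_def by blast
  then show ?thesis using g jk by (intro commute_pow_pow_mat) auto
qed

lemma quantum_solution_row_congruence:
  assumes p: "prime p" "odd p" and qs: "quantum_solution p r s A c (p ^ N) G g"
    and Ms: "\<forall>j<s. g j = kron_list (Ms j) \<and> length (Ms j) = N \<and> set (Ms j) \<subseteq> monomial_group p"
    and x: "\<forall>j<s. tensor_phase p (Ms j) = omega p ^ x j" and i: "i < r"
  shows "[(\<Sum>j<s. A i j * int (x j)) = c i] (mod int p)"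
proof -
  have p0: "p > 0" using prime_gt_0_nat[OF p(1)] .
  have g_row: "ord_prod (p ^ N) s (\<lambda>j. g j ^\<^sub>m nat (A i j mod int p))
      = (omega p ^ nat (c i mod int p)) \<cdot>\<^sub>m 1\<^sub>m (p ^ N)"
    using qs i unfolding quantum_solution_def by blast
  have g_carrier: "\<forall>j<s. g j \<in> carrier_mat (p ^ N) (p ^ N)"
    using Ms kron_list_monomial_carrier by metis
  define e where "e j = nat (A i j mod int p)" for j
  define c' where "c' = nat (c i mod int p)"
  have "(\<Prod>j<s. tensor_phase p (Ms j) ^ e j) = ((omega p ^ c') ^ 2) ^ ((p + 1) div 2)"
  proof (rule quantum_row_phase[OF p(1)])
    show "\<forall>j<s. length (Ms j) = N \<and> set (Ms j) \<subseteq> monomial_group p" using Ms by simp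
    show "\<forall>j<s. \<forall>k<s. kron_list (Ms j) ^\<^sub>m e j * kron_list (Ms k) ^\<^sub>m e k
                        = kron_list (Ms k) ^\<^sub>m e k * kron_list (Ms j) ^\<^sub>m e j"
    proof (intro allI impI)
      fix j k assume "j < s" "k < s"
      then show "kron_list (Ms j) ^\<^sub>m e j * kron_list (Ms k) ^\<^sub>m e k
          = kron_list (Ms k) ^\<^sub>m e k * kron_list (Ms j) ^\<^sub>m e j"
        using quantum_solution_row_powers_commute[OF qs g_carrier i, of j k] Ms
        unfolding e_def by simp
    qed
    have "map (\<lambda>j. kron_list (Ms j) ^\<^sub>m e j) [0..<s] = map (\<lambda>j. g j ^\<^sub>m e j) [0..<s]"
      using Ms by simp
    then have "ord_prod (p ^ N) s (\<lambda>j. kron_list (Ms j) ^\<^sub>m e j) = ord_prod (p ^ N) s (\<lambda>j. g j ^\<^sub>m e j)"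
      by (simp only: ord_prod_def)
    then show "ord_prod (p ^ N) s (\<lambda>j. kron_list (Ms j) ^\<^sub>m e j) = (omega p ^ c') \<cdot>\<^sub>m 1\<^sub>m (p ^ N)"
      using g_row unfolding e_def c'_def by simp
    show "omega p ^ c' \<noteq> 0" by (simp add: omega_def)
  qed
  also have "\<dots> = omega p ^ c'"
    by (rule omega_pow_square_half[OF p(2)])
  finally have row_phase: "(\<Prod>j<s. tensor_phase p (Ms j) ^ e j) = omega p ^ c'" .
  have "(\<Prod>j<s. tensor_phase p (Ms j) ^ e j) = omega p ^ (\<Sum>j<s. e j * x j)"
    unfolding power_sum using x by (intro prod.cong) (simp_all only: power_mult[symmetric] mult.commute lessThan_iff)
  then have "[\<Sum>j<s. e j * x j = c'] (mod p)"
    using row_phase by (simp add: omega_pow_eq_iff[OF p0] cong_def)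
  then have sum_c': "[int (\<Sum>j<s. e j * x j) = int c'] (mod int p)" by (simp only: cong_int_iff)
  have "[(\<Sum>j<s. A i j * int (x j)) = int (\<Sum>j<s. e j * x j)] (mod int p)"
    unfolding of_nat_sum of_nat_mult
    using p0 by (intro cong_sum cong_mult) (simp_all add: e_def cong_def)
  also note sum_c'
  also have "[int c' = c i] (mod int p)" using p0 by (simp add: c'_def cong_def)
  finally show ?thesis .
qed

theorem quantum_solution_imp_classical_solution:
  assumes p: "prime p" "odd p" and Q: "Q \<subseteq> Tgrp p"
    and qs: "quantum_solution p r s A c (p ^ N) (KQN p Q N) g"
  shows "\<exists>x. classical_solution p r s A c x"
proof -
  have p0: "p > 0" and p1: "p > 1" using prime_gt_0_nat[OF p(1)] prime_gt_1_nat[OF p(1)] by auto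
  have gK: "\<forall>j<s. g j \<in> KQN p Q N" and g_root: "\<forall>j<s. g j ^\<^sub>m p = 1\<^sub>m (p ^ N)"
    using qs unfolding quantum_solution_def by blast+
  obtain Ms where
    Ms: "\<forall>j<s. g j = kron_list (Ms j) \<and> length (Ms j) = N \<and> set (Ms j) \<subseteq> monomial_group p"
    by (rule KQN_kron_factors[OF p1 Q gK])
  have "\<forall>j\<in>{..<s}. \<exists>x. tensor_phase p (Ms j) = omega p ^ x"
  proof
    fix j assume j: "j \<in> {..<s}"
    have "tensor_phase p (Ms j) ^ p = 1"
      using g_root j Ms by (intro tensor_phase_root_of_unity[OF p(1)]) auto
    then obtain x where "tensor_phase p (Ms j) = omega p ^ x"
      by (rule root_of_unity_eq_omega_pow[OF p0])
    then show "\<exists>x. tensor_phase p (Ms j) = omega p ^ x" by blast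
  qed
  then obtain x where "\<forall>j\<in>{..<s}. tensor_phase p (Ms j) = omega p ^ x j"
    by (rule bchoice[THEN exE])
  then have "\<forall>j<s. tensor_phase p (Ms j) = omega p ^ x j" by simp
  then have "classical_solution p r s A c (\<lambda>j. int (x j))"
    using quantum_solution_row_congruence[OF p qs Ms] unfolding classical_solution_def cong_def
    by blast
  then show ?thesis by blast
qed

theorem classical_solution_imp_quantum_solution:
  assumes p: "p > 0" and TQ: "Tpow p p \<subseteq> Q" and N: "N \<ge> 1"
    and cs: "classical_solution p r s A c x"
  shows "quantum_solution p r s A c (p ^ N) (KQN p Q N)
           (\<lambda>j. (omega p ^ nat (x j mod int p)) \<cdot>\<^sub>m 1\<^sub>m (p ^ N))"
  unfolding quantum_solution_def
proof (intro conjI allI impI)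
  show "omega p \<cdot>\<^sub>m 1\<^sub>m (p ^ N) \<in> KQN p Q N"
    using omega_pow_smult_one_in_KQN[OF p TQ N, of 1] by simp
  fix j
  show "(omega p ^ nat (x j mod int p)) \<cdot>\<^sub>m 1\<^sub>m (p ^ N) \<in> KQN p Q N"
    by (rule omega_pow_smult_one_in_KQN[OF p TQ N])
  show "((omega p ^ nat (x j mod int p)) \<cdot>\<^sub>m 1\<^sub>m (p ^ N)) ^\<^sub>m p = 1\<^sub>m (p ^ N)"
    using omega_pow_power[OF p] by (simp add: smult_one_mat_pow)
  fix k
  show "((omega p ^ nat (x j mod int p)) \<cdot>\<^sub>m 1\<^sub>m (p ^ N)) * ((omega p ^ nat (x k mod int p)) \<cdot>\<^sub>m 1\<^sub>m (p ^ N))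
      = ((omega p ^ nat (x k mod int p)) \<cdot>\<^sub>m 1\<^sub>m (p ^ N)) * ((omega p ^ nat (x j mod int p)) \<cdot>\<^sub>m 1\<^sub>m (p ^ N))"
    by (simp add: smult_one_mat_mult mult.commute)
next
  fix i assume i: "i < r"
  define a where "a j = nat (A i j mod int p)" for j
  define xn where "xn j = nat (x j mod int p)" for j
  have "[int (\<Sum>j<s. a j * xn j) = (\<Sum>j<s. A i j * x j)] (mod int p)"
    unfolding of_nat_sum of_nat_mult
    using p by (intro cong_sum cong_mult) (simp_all add: a_def xn_def cong_def)
  also have "[(\<Sum>j<s. A i j * x j) = c i] (mod int p)"
    using cs i by (simp add: classical_solution_def cong_def)
  also have "[c i = int (nat (c i mod int p))] (mod int p)"
    using p by (simp add: cong_def)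
  finally have "[(\<Sum>j<s. a j * xn j) = nat (c i mod int p)] (mod p)"
    by (simp only: cong_int_iff)
  then have "omega p ^ (\<Sum>j<s. xn j * a j) = omega p ^ nat (c i mod int p)"
    by (simp add: omega_pow_eq_iff[OF p] cong_def mult.commute)
  moreover have "ord_prod (p ^ N) s (\<lambda>j. ((omega p ^ xn j) \<cdot>\<^sub>m 1\<^sub>m (p ^ N)) ^\<^sub>m a j)
      = (\<Prod>j<s. omega p ^ (xn j * a j)) \<cdot>\<^sub>m 1\<^sub>m (p ^ N)"
    by (simp add: smult_one_mat_pow power_mult ord_prod_smult_one)
  ultimately show "ord_prod (p ^ N) s
        (\<lambda>j. ((omega p ^ nat (x j mod int p)) \<cdot>\<^sub>m 1\<^sub>m (p ^ N)) ^\<^sub>m nat (A i j mod int p))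
      = omega p ^ nat (c i mod int p) \<cdot>\<^sub>m 1\<^sub>m (p ^ N)"
    by (simp add: a_def xn_def power_sum)
qed

theorem theorem3:
  fixes p r s m N :: nat and A :: "nat \<Rightarrow> nat \<Rightarrow> int" and c :: "nat \<Rightarrow> int"
    and Q :: "complex mat set"
  assumes "prime p" and "odd p"
    and "m \<ge> 1" and "N \<ge> 1"
    and "is_subgroup_mat p Q"
    and "Tpow p p \<subseteq> Q" and "Q \<subseteq> Tpow p (p ^ m)"
    and "\<forall>S\<in>Q. Xmat p * S * (Xmat p ^\<^sub>m (p - 1)) \<in> Q"
  shows "(\<exists>g. quantum_solution p r s A c (p ^ N) (KQN p Q N) g)
     \<longleftrightarrow> (\<exists>x. classical_solution p r s A c x)"
proof
  assume "\<exists>g. quantum_solution p r s A c (p ^ N) (KQN p Q N) g"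
  moreover have "Q \<subseteq> Tgrp p" using assms(7) by (auto simp: Tpow_def)
  ultimately show "\<exists>x. classical_solution p r s A c x"
    using quantum_solution_imp_classical_solution[OF assms(1,2)] by blast
next
  assume "\<exists>x. classical_solution p r s A c x"
  then show "\<exists>g. quantum_solution p r s A c (p ^ N) (KQN p Q N) g"
    using classical_solution_imp_quantum_solution[OF prime_gt_0_nat[OF assms(1)] assms(6,4)] by blast
qed

end
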